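(* Let $H$ be an $(\varepsilon,p)$-regular $k$-graph on vertex set $[n]$ ($n$ divisible by $q$) and run Procedure 1 on $H$. Condition on an outcome of Steps (1)–(2) for which $|I_e|=(1\pm(z+2)\varepsilon)\kappa$ for every edge $e$ of $H$ and every set of $k+t$ vertices, $1\le t\le 2q-k$, is condensed in at most $4q+1$ of the $D_{\sigma_i}$, so that the remaining randomness is the labelling in Step (3). Fix $d\in\{1,\dots,\ell\}$, two sets $A_1,A_2$ of $k-d$ vertices each, and a family $\mathcal B$ of $d$-sets of vertices such that $A_1\cup B$ and $A_2\cup B$ are both edges of $H$ for all $B\in\mathcal B$. Suppose $|\mathcal B|/\kappa^{2z+1}\gg\log n$. Then with probability $1-o(n^{-(k+2q)-1})$, the number $N_{\mathcal B}$ of $B\in\mathcal B$ such that both $A_1\cup B$ and $A_2\cup B$ lie in $\bigcup_iE(H'_i)$ is at most $7q|\mathcal B|/\kappa^{z}$.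
   Context: Fixed integers $k,\ell$ with $1\le\ell<k/2$; $z=\lceil(k-\ell)/\ell\rceil$, $q=\ell z$. $a_n\gg b_n$ means $a_n/b_n\to\infty$; $x=(1\pm a)y$ means $(1-a)y\le x\le(1+a)y$. A $k$-graph is a $k$-uniform hypergraph; an $n$-vertex $k$-graph $H$ is $(\varepsilon,p)$-regular if for every $d\in\{1,\dots,\ell\}$, $s\in\{1,\dots,2z+2\}$ and any $s$ distinct $(k-d)$-subsets $A_1,\dots,A_s$ with $|\bigcup_iA_i|\le k+2q$, the number of $d$-sets $D$ with all $A_i\cup D\in E(H)$ is $(1\pm\varepsilon)\frac{n^d}{d!}p^s$. For ordered $q$-tuples $\mathbf v_1=(v_1,\dots,v_q)$, $\mathbf v_2=(v_{q+1},\dots,v_{2q})$ let $e_i(\mathbf v_1,\mathbf v_2)=\{v_{i\ell+1},\dots,v_{i\ell+k}\}$, $i=0,\dots,z-1$; $\mathbf v_1$ precedes $\mathbf v_2$ if all are edges of $H$, and then $(\mathbf v_1,\mathbf v_2)$ owns these $z$ edges. For a permutation $\sigma$ of $[n]$, $D_\sigma$ has vertex set $\{(\sigma((i-1)q+1),\dots,\sigma(iq)):i\le n/q\}$ and arc $\mathbf v\to\mathbf w$ ($\mathbf v\ne\mathbf w$) iff $\mathbf v$ precedes $\mathbf w$. Procedure 1: $\kappa=\frac{6(k+1)\log n}{\varepsilon^2}$, $r=\frac{\ell qn^{k-2}}{k!p^{z-1}}\kappa$. (1) Independent uniform random permutations $\sigma_1,\dots,\sigma_r$ of $[n]$. (2)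 $H_i$ = edges of $H$ owned by arcs of $D_{\sigma_i}$. (3) For each edge $e$, $I_e=\{i:e\in H_i\}$; if nonempty, independently label $e$ by a uniform random element of $I_e$. (4) $D'_{\sigma_i}$ keeps an arc of $D_{\sigma_i}$ iff all $z$ edges it owns are labelled $i$. (5) $H'_i$ = edges owned by arcs of $D'_{\sigma_i}$. Each edge $e$ is owned by at most one arc of $D_{\sigma_i}$; if it exists, $\phi_i(e)$ is the set of $z$ edges owned by that arc. A set $S$ of $k+t$ vertices is condensed in $D_{\sigma_i}$ if there are edges $e_1\neq e_2$ of $H$ with $S=e_1\cup e_2$ and $\phi_i(e_1)\cap\phi_i(e_2)\neq\emptyset$. *)

theory Defs
  imports "HOL-Probability.Probability"
begin

definition zpar :: "nat \<Rightarrow> nat \<Rightarrow> nat" where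
  "zpar k l = nat \<lceil>real (k - l) / real l\<rceil>"

definition qpar :: "nat \<Rightarrow> nat \<Rightarrow> nat" where
  "qpar k l = l * zpar k l"

definition tup :: "nat \<Rightarrow> nat \<Rightarrow> (nat \<Rightarrow> nat) \<Rightarrow> nat \<Rightarrow> nat list" where
  "tup k l \<sigma> a = map \<sigma> [a * qpar k l + 1 ..< a * qpar k l + qpar k l + 1]"

(* e_i(v1,v2) = {v_{i l+1},...,v_{i l+k}} where (v_1,...,v_{2q}) = v1 @ v2 *)
definition eseg :: "nat \<Rightarrow> nat \<Rightarrow> nat list \<Rightarrow> nat list \<Rightarrow> nat \<Rightarrow> nat set" where
  "eseg k l v w i = set (map (\<lambda>j. (v @ w) ! (i * l + j)) [0..<k])"

definition owned :: "nat \<Rightarrow> nat \<Rightarrow> nat list \<times> nat list \<Rightarrow> nat set set" where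
  "owned k l a = {eseg k l (fst a) (snd a) i | i. i < zpar k l}"

definition precedes :: "nat \<Rightarrow> nat \<Rightarrow> nat set set \<Rightarrow> nat list \<Rightarrow> nat list \<Rightarrow> bool" where
  "precedes k l H v w \<longleftrightarrow> (\<forall>i < zpar k l. eseg k l v w i \<in> H)"

definition arcs :: "nat \<Rightarrow> nat \<Rightarrow> nat \<Rightarrow> nat set set \<Rightarrow> (nat \<Rightarrow> nat) \<Rightarrow> (nat list \<times> nat list) set" where
  "arcs k l n H \<sigma> = {(tup k l \<sigma> a, tup k l \<sigma> b) | a b.
      a < n div qpar k l \<and> b < n div qpar k l \<and> tup k l \<sigma> a \<noteq> tup k l \<sigma> b \<and>
      precedes k l H (tup k l \<sigma> a) (tup k l \<sigma> b)}"

definition Hsub :: "nat \<Rightarrow> nat \<Rightarrow> nat \<Rightarrow> nat set set \<Rightarrow> (nat \<Rightarrow> nat) \<Rightarrow> nat set set" where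
  "Hsub k l n H \<sigma> = (\<Union>a \<in> arcs k l n H \<sigma>. owned k l a)"

definition Iset :: "nat \<Rightarrow> nat \<Rightarrow> nat \<Rightarrow> nat set set \<Rightarrow> (nat \<Rightarrow> nat \<Rightarrow> nat) \<Rightarrow> nat \<Rightarrow> nat set \<Rightarrow> nat set" where
  "Iset k l n H \<sigma>s r e = {i. i < r \<and> e \<in> Hsub k l n H (\<sigma>s i)}"

(* Step (3): independent uniform labels, for edges with I_e nonempty *)
definition label_pmf :: "nat \<Rightarrow> nat \<Rightarrow> nat \<Rightarrow> nat set set \<Rightarrow> (nat \<Rightarrow> nat \<Rightarrow> nat) \<Rightarrow> nat \<Rightarrow> (nat set \<Rightarrow> nat) pmf" where
  "label_pmf k l n H \<sigma>s r =
     Pi_pmf {e \<in> H. Iset k l n H \<sigma>s r e \<noteq> {}} 0 (\<lambda>e. pmf_of_set (Iset k l n H \<sigma>s r e))"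

definition Hprime :: "nat \<Rightarrow> nat \<Rightarrow> nat \<Rightarrow> nat set set \<Rightarrow> (nat \<Rightarrow> nat \<Rightarrow> nat) \<Rightarrow> (nat set \<Rightarrow> nat) \<Rightarrow> nat \<Rightarrow> nat set set" where
  "Hprime k l n H \<sigma>s lab i =
     (\<Union>a \<in> {a \<in> arcs k l n H (\<sigma>s i). \<forall>e \<in> owned k l a. lab e = i}. owned k l a)"

definition condensed :: "nat \<Rightarrow> nat \<Rightarrow> nat \<Rightarrow> nat set set \<Rightarrow> (nat \<Rightarrow> nat) \<Rightarrow> nat set \<Rightarrow> bool" where
  "condensed k l n H \<sigma> S \<longleftrightarrow>
     (\<exists>e1 e2 a1 a2. e1 \<in> H \<and> e2 \<in> H \<and> e1 \<noteq> e2 \<and> S = e1 \<union> e2 \<and>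
        a1 \<in> arcs k l n H \<sigma> \<and> a2 \<in> arcs k l n H \<sigma> \<and>
        e1 \<in> owned k l a1 \<and> e2 \<in> owned k l a2 \<and> owned k l a1 \<inter> owned k l a2 \<noteq> {})"

definition kgraph :: "nat \<Rightarrow> nat \<Rightarrow> nat set set \<Rightarrow> bool" where
  "kgraph k n H \<longleftrightarrow> (\<forall>e \<in> H. e \<subseteq> {1..n} \<and> card e = k)"

definition regular :: "nat \<Rightarrow> nat \<Rightarrow> nat \<Rightarrow> nat set set \<Rightarrow> real \<Rightarrow> real \<Rightarrow> bool" where
  "regular k l n H \<epsilon> p \<longleftrightarrow>
     (\<forall>d \<in> {1..l}. \<forall>s \<in> {1..2 * zpar k l + 2}. \<forall>\<A>.
        \<A> \<subseteq> {A. A \<subseteq> {1..n} \<and> card A = k - d} \<and> card \<A> = s \<and>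
        card (\<Union>\<A>) \<le> k + 2 * qpar k l \<longrightarrow>
        (let c = real (card {D. D \<subseteq> {1..n} \<and> card D = d \<and> (\<forall>A \<in> \<A>. A \<union> D \<in> H)});
             m = real n ^ d / fact d * p ^ s
         in (1 - \<epsilon>) * m \<le> c \<and> c \<le> (1 + \<epsilon>) * m))"

definition kappa :: "nat \<Rightarrow> nat \<Rightarrow> real \<Rightarrow> real" where
  "kappa k n \<epsilon> = 6 * (real k + 1) * ln (real n) / \<epsilon>\<^sup>2"

definition rpar :: "nat \<Rightarrow> nat \<Rightarrow> nat \<Rightarrow> real \<Rightarrow> real \<Rightarrow> nat" where
  "rpar k l n \<epsilon> p = nat \<lceil>real l * real (qpar k l) * real n ^ (k - 2)
       / (fact k * p ^ (zpar k l - 1)) * kappa k n \<epsilon>\<rceil>"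

end

theory Submission
  imports Defs
begin

text \<open>
  Once the permutations are fixed, the labelling of Step (3) is a product of independent uniform
  choices, one per edge, and \<open>N\<^sub>\<B>\<close> is a function of it. Relabelling a single edge \<open>f\<close> changes
  \<open>N\<^sub>\<B>\<close> by at most \<open>4z\<close>, and only if some arc of some \<open>D\<^sub>\<sigma>\<^sub>i\<close> owns \<open>f\<close> together with some
  \<open>A\<^sub>j \<union> B\<close>; with \<open>\<delta> = (z+2)\<epsilon>\<close> there are at most \<open>2z(1+\<delta>)\<kappa>|\<B>|\<close> such edges. McDiarmid's
  inequality therefore puts \<open>N\<^sub>\<B>\<close> within \<open>q|\<B>|/\<kappa>\<^sup>z\<close> of its mean except with probability
  \<open>exp(-\<Omega>(|\<B>|/\<kappa>\<^sup>2\<^sup>z\<^sup>+\<^sup>1))\<close>, which is \<open>o(n\<^sup>-\<^sup>k\<^sup>-\<^sup>2\<^sup>q\<^sup>-\<^sup>1)\<close> because \<open>|\<B>|/\<kappa>\<^sup>2\<^sup>z\<^sup>+\<^sup>1 \<gg> log n\<close>.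

  The mean is at most \<open>6q|\<B>|/\<kappa>\<^sup>z\<close>: both \<open>A\<^sub>1 \<union> B\<close> and \<open>A\<^sub>2 \<union> B\<close> survive only if some arc owning
  each of them is kept, i.e. all its \<open>z\<close> edges carry its label. If one arc owns both edges then
  \<open>A\<^sub>1 \<union> A\<^sub>2 \<union> B\<close> is condensed, which happens for at most \<open>4q+1\<close> permutations, each costing
  \<open>\<kappa>\<^sup>-\<^sup>z\<close>; two different arcs cost \<open>\<kappa>\<^sup>-\<^sup>2\<^sup>z\<close>, and there are at most \<open>((1+\<delta>)\<kappa>)\<^sup>2\<close> such pairs.
\<close>

section \<open>McDiarmid's inequality for uniform product measures\<close>

definition avg :: "'a set \<Rightarrow> ('a \<Rightarrow> real) \<Rightarrow> real" where
  "avg \<Omega> g = (\<Sum>x\<in>\<Omega>. g x) / real (card \<Omega>)"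

lemma avg_mono:
  assumes "\<And>x. x \<in> \<Omega> \<Longrightarrow> f x \<le> g x"
  shows "avg \<Omega> f \<le> avg \<Omega> g"
  unfolding avg_def by (intro divide_right_mono sum_mono assms) auto

lemma avg_cmult: "avg \<Omega> (\<lambda>x. c * f x) = c * avg \<Omega> f"
  unfolding avg_def by (simp add: sum_distrib_left)

lemma avg_const: "finite \<Omega> \<Longrightarrow> \<Omega> \<noteq> {} \<Longrightarrow> avg \<Omega> (\<lambda>_. c) = c"
  unfolding avg_def by simp

lemma avg_diff: "avg \<Omega> (\<lambda>x. f x - g x) = avg \<Omega> f - avg \<Omega> g"
  unfolding avg_def by (simp add: sum_subtractf diff_divide_distrib)

lemma avg_abs: "\<bar>avg \<Omega> f\<bar> \<le> avg \<Omega> (\<lambda>x. \<bar>f x\<bar>)"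
  unfolding avg_def by (simp add: abs_div_pos order_trans[OF sum_abs] divide_right_mono)

lemma hoeffding_lemma_avg:
  fixes h :: "'b \<Rightarrow> real"
  assumes fin: "finite Y" and ne: "Y \<noteq> {}" and rng: "\<And>y. y \<in> Y \<Longrightarrow> h y \<in> {a..b}"
    and lam: "s \<ge> 0"
  shows "avg Y (\<lambda>y. exp (s * (h y - avg Y h))) \<le> exp (s\<^sup>2 * (b - a)\<^sup>2 / 8)"
proof (cases "s = 0")
  case True
  thus ?thesis using fin ne by (simp add: avg_const)
next
  case False
  hence lp: "s > 0" using lam by simp
  interpret interval_bounded_random_variable "measure_pmf (pmf_of_set Y)" h a b
    by unfold_locales (use fin ne rng in \<open>auto simp: AE_measure_pmf_iff\<close>)
  have E: "measure_pmf.expectation (pmf_of_set Y) h = avg Y h"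
    using integral_pmf_of_set[OF ne fin, of h] unfolding avg_def by simp
  define F where "F = (\<lambda>y. exp (s * (h y - measure_pmf.expectation (pmf_of_set Y) h)))"
  have cp: "real (card Y) > 0" using fin ne by (simp add: card_gt_0_iff)
  have "nn_integral (measure_pmf (pmf_of_set Y)) (\<lambda>y. ennreal (F y))
        = (\<Sum>y\<in>Y. ennreal (F y)) / of_nat (card Y)"
    by (rule nn_integral_pmf_of_set[OF ne fin])
  also have "\<dots> = ennreal (\<Sum>y\<in>Y. F y) / ennreal (real (card Y))"
    by (subst sum_ennreal) (auto simp: F_def ennreal_of_nat_eq_real_of_nat)
  also have "\<dots> = ennreal (avg Y F)"
    unfolding avg_def by (rule divide_ennreal) (use cp in \<open>auto simp: F_def intro: sum_nonneg\<close>)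
  finally have "ennreal (avg Y F) = nn_integral (measure_pmf (pmf_of_set Y)) (\<lambda>y. ennreal (F y))"
    by simp
  also have "\<dots> \<le> ennreal (exp (s\<^sup>2 * (b - a)\<^sup>2 / 8))"
    using Hoeffdings_lemma_nn_integral[OF lp] unfolding F_def .
  finally have "avg Y F \<le> exp (s\<^sup>2 * (b - a)\<^sup>2 / 8)" by (subst (asm) ennreal_le_iff) auto
  thus ?thesis unfolding F_def E .
qed

lemma PiE_dflt_insert:
  assumes "x \<notin> S"
  shows "PiE_dflt (insert x S) d B = (\<lambda>(y, w). w(x := y)) ` (B x \<times> PiE_dflt S d B)"
proof (intro equalityI subsetI)
  fix f assume f: "f \<in> PiE_dflt (insert x S) d B"
  have "f = (\<lambda>(y, w). w(x := y)) (f x, f(x := d))" by simp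
  moreover have "(f x, f(x := d)) \<in> B x \<times> PiE_dflt S d B"
    using f assms by (auto simp: PiE_dflt_def)
  ultimately show "f \<in> (\<lambda>(y, w). w(x := y)) ` (B x \<times> PiE_dflt S d B)" by blast
qed (use assms in \<open>auto simp: PiE_dflt_def\<close>)

lemma inj_on_PiE_dflt_insert:
  assumes "x \<notin> S"
  shows "inj_on (\<lambda>(y, w). w(x := y)) (B x \<times> PiE_dflt S d B)"
proof (rule inj_onI, clarify)
  fix y w y' w'
  assume a: "w \<in> PiE_dflt S d B" "w' \<in> PiE_dflt S d B" "w(x := y) = w'(x := y')"
  have "y = y'" using fun_cong[OF a(3), of x] by simp
  moreover have "w = w'"
  proof
    fix v show "w v = w' v"
      using fun_cong[OF a(3), of v] a(1,2) assms by (cases "v = x") (auto simp: PiE_dflt_def)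
  qed
  ultimately show "y = y' \<and> w = w'" by simp
qed

lemma avg_PiE_dflt_insert:
  assumes "finite S" "x \<notin> S" "\<And>v. v \<in> insert x S \<Longrightarrow> finite (B v) \<and> B v \<noteq> {}"
  shows "avg (PiE_dflt (insert x S) d B) F
         = avg (PiE_dflt S d B) (\<lambda>w. avg (B x) (\<lambda>y. F (w(x := y))))"
proof -
  have card_ins: "card (PiE_dflt (insert x S) d B) = card (B x) * card (PiE_dflt S d B)"
    using card_PiE_dflt[of "insert x S" B d] card_PiE_dflt[of S B d] assms by simp
  have sum_ins: "(\<Sum>f\<in>PiE_dflt (insert x S) d B. F f)
                 = (\<Sum>w\<in>PiE_dflt S d B. \<Sum>y\<in>B x. F (w(x := y)))"
  proof -
    have "(\<Sum>f\<in>PiE_dflt (insert x S) d B. F f)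
          = (\<Sum>(y, w)\<in>B x \<times> PiE_dflt S d B. F (w(x := y)))"
      unfolding PiE_dflt_insert[OF assms(2)]
      by (subst sum.reindex[OF inj_on_PiE_dflt_insert[OF assms(2)]]) (simp add: case_prod_beta comp_def)
    also have "\<dots> = (\<Sum>y\<in>B x. \<Sum>w\<in>PiE_dflt S d B. F (w(x := y)))"
      by (subst sum.cartesian_product) (simp add: case_prod_beta)
    also have "\<dots> = (\<Sum>w\<in>PiE_dflt S d B. \<Sum>y\<in>B x. F (w(x := y)))"
      by (rule sum.swap)
    finally show ?thesis .
  qed
  have "card (B x) > 0" using assms by (simp add: card_gt_0_iff)
  moreover have "card (PiE_dflt S d B) > 0"
    using assms by (subst card_gt_0_iff) (auto intro!: finite_PiE_dflt)
  ultimately show ?thesis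
    unfolding avg_def card_ins sum_ins by (simp add: sum_divide_distrib[symmetric] field_simps)
qed

lemma avg_fibre_bounded_difference:
  assumes "x \<notin> S"
    and fin: "\<And>v. v \<in> insert x S \<Longrightarrow> finite (B v) \<and> B v \<noteq> {}"
    and diff: "\<And>f v y. f \<in> PiE_dflt (insert x S) d B \<Longrightarrow> v \<in> insert x S \<Longrightarrow> y \<in> B v \<Longrightarrow>
                 \<bar>g (f(v := y)) - g f\<bar> \<le> c v"
    and f: "f \<in> PiE_dflt S d B" and v: "v \<in> S" and y: "y \<in> B v"
  shows "\<bar>avg (B x) (\<lambda>y'. g ((f(v := y))(x := y'))) - avg (B x) (\<lambda>y'. g (f(x := y')))\<bar> \<le> c v"
proof -
  have mem: "f(x := y') \<in> PiE_dflt (insert x S) d B" if "y' \<in> B x" for y'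
    using f that by (auto simp: PiE_dflt_def)
  have "avg (B x) (\<lambda>y'. g ((f(v := y))(x := y'))) - avg (B x) (\<lambda>y'. g (f(x := y')))
        = avg (B x) (\<lambda>y'. g ((f(x := y'))(v := y)) - g (f(x := y')))"
    unfolding avg_diff[symmetric] using v \<open>x \<notin> S\<close>
    by (intro arg_cong[where f="avg (B x)"] ext) (metis fun_upd_twist)
  hence "\<bar>avg (B x) (\<lambda>y'. g ((f(v := y))(x := y'))) - avg (B x) (\<lambda>y'. g (f(x := y')))\<bar>
        = \<bar>avg (B x) (\<lambda>y'. g ((f(x := y'))(v := y)) - g (f(x := y')))\<bar>" by simp
  also have "\<dots> \<le> avg (B x) (\<lambda>y'. \<bar>g ((f(x := y'))(v := y)) - g (f(x := y'))\<bar>)"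
    by (rule avg_abs)
  also have "\<dots> \<le> avg (B x) (\<lambda>_. c v)"
    using diff[OF mem] v y by (intro avg_mono) auto
  also have "\<dots> = c v" using fin by (simp add: avg_const)
  finally show ?thesis .
qed

lemma avg_exp_fibre_le:
  assumes fin: "finite (B x)" "B x \<noteq> {}" and "s \<ge> 0"
    and diff: "\<And>y y'. y \<in> B x \<Longrightarrow> y' \<in> B x \<Longrightarrow> \<bar>g (w(x := y')) - g (w(x := y))\<bar> \<le> c"
  shows "avg (B x) (\<lambda>y. exp (s * (g (w(x := y)) - avg (B x) (\<lambda>y. g (w(x := y))))))
         \<le> exp (s\<^sup>2 * c\<^sup>2 / 8)"
proof -
  define h where "h = (\<lambda>y. g (w(x := y)))"
  define m where "m = Min (h ` B x)"
  have "m \<in> h ` B x" unfolding m_def using fin by (intro Min_in) auto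
  then obtain y0 where y0: "y0 \<in> B x" "m = h y0" by blast
  have "h y \<in> {m..m + c}" if "y \<in> B x" for y
  proof -
    have "m \<le> h y" unfolding m_def using fin that by (intro Min_le) auto
    moreover have "h y - m \<le> c" using diff[OF y0(1) that] unfolding y0(2) h_def by simp
    ultimately show ?thesis by simp
  qed
  from hoeffding_lemma_avg[OF fin this \<open>s \<ge> 0\<close>] show ?thesis by (simp add: h_def)
qed

text \<open>The induction peels off one coordinate at a time and applies Hoeffding's lemma on its fibre.\<close>

lemma mcdiarmid_mgf_bound:
  fixes B :: "'a \<Rightarrow> 'b set" and g :: "('a \<Rightarrow> 'b) \<Rightarrow> real" and c :: "'a \<Rightarrow> real"
  assumes "finite S" "\<And>x. x \<in> S \<Longrightarrow> finite (B x) \<and> B x \<noteq> {}" "s \<ge> 0"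
    "\<And>f x y. f \<in> PiE_dflt S d B \<Longrightarrow> x \<in> S \<Longrightarrow> y \<in> B x \<Longrightarrow> \<bar>g (f(x := y)) - g f\<bar> \<le> c x"
  shows "avg (PiE_dflt S d B) (\<lambda>f. exp (s * (g f - avg (PiE_dflt S d B) g)))
         \<le> exp (s\<^sup>2 * (\<Sum>x\<in>S. (c x)\<^sup>2) / 8)"
  using assms(1,2,4)
proof (induction S arbitrary: g rule: finite_induct)
  case empty
  have "PiE_dflt {} d B = {\<lambda>_. d}" by (auto simp: PiE_dflt_def)
  thus ?case by (simp add: avg_def)
next
  case (insert x S g)
  define \<Omega> where "\<Omega> = PiE_dflt S d B"
  define G where "G = (\<lambda>w. avg (B x) (\<lambda>y. g (w(x := y))))"
  have fin: "\<And>v. v \<in> insert x S \<Longrightarrow> finite (B v) \<and> B v \<noteq> {}" using insert.prems(1) by blast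
  have avg_g: "avg (PiE_dflt (insert x S) d B) g = avg \<Omega> G"
    unfolding \<Omega>_def G_def by (rule avg_PiE_dflt_insert[OF insert.hyps fin])
  have IH: "avg \<Omega> (\<lambda>f. exp (s * (G f - avg \<Omega> G))) \<le> exp (s\<^sup>2 * (\<Sum>v\<in>S. (c v)\<^sup>2) / 8)"
    unfolding \<Omega>_def G_def
  proof (rule insert.IH)
    show "\<And>v. v \<in> S \<Longrightarrow> finite (B v) \<and> B v \<noteq> {}" using fin by blast
    show "\<bar>avg (B x) (\<lambda>y'. g ((f(v := y))(x := y'))) - avg (B x) (\<lambda>y'. g (f(x := y')))\<bar> \<le> c v"
      if "f \<in> PiE_dflt S d B" "v \<in> S" "y \<in> B v" for f v y
      by (rule avg_fibre_bounded_difference[OF insert.hyps(2) fin insert.prems(2) that])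
  qed
  have fibre: "avg (B x) (\<lambda>y. exp (s * (g (w(x := y)) - G w))) \<le> exp (s\<^sup>2 * (c x)\<^sup>2 / 8)"
    if "w \<in> \<Omega>" for w
    unfolding G_def
  proof (rule avg_exp_fibre_le)
    fix y y' assume yy: "y \<in> B x" "y' \<in> B x"
    have "w(x := y) \<in> PiE_dflt (insert x S) d B"
      using that yy(1) insert.hyps(2) by (auto simp: \<Omega>_def PiE_dflt_def)
    from insert.prems(2)[OF this insertI1 yy(2)]
    show "\<bar>g (w(x := y')) - g (w(x := y))\<bar> \<le> c x" by (simp only: fun_upd_upd)
  qed (use fin assms(3) in auto)
  have "avg (PiE_dflt (insert x S) d B) (\<lambda>f. exp (s * (g f - avg (PiE_dflt (insert x S) d B) g)))
      = avg \<Omega> (\<lambda>w. avg (B x) (\<lambda>y. exp (s * (g (w(x := y)) - avg \<Omega> G))))"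
    unfolding avg_g \<Omega>_def by (rule avg_PiE_dflt_insert[OF insert.hyps fin])
  also have "\<dots> = avg \<Omega> (\<lambda>w. exp (s * (G w - avg \<Omega> G)) * avg (B x) (\<lambda>y. exp (s * (g (w(x := y)) - G w))))"
    unfolding avg_cmult[symmetric]
    by (intro arg_cong[where f="avg \<Omega>"] arg_cong[where f="avg (B x)"] ext)
       (simp add: exp_add[symmetric] algebra_simps)
  also have "\<dots> \<le> avg \<Omega> (\<lambda>w. exp (s * (G w - avg \<Omega> G)) * exp (s\<^sup>2 * (c x)\<^sup>2 / 8))"
    by (intro avg_mono mult_left_mono fibre) auto
  also have "\<dots> = exp (s\<^sup>2 * (c x)\<^sup>2 / 8) * avg \<Omega> (\<lambda>w. exp (s * (G w - avg \<Omega> G)))"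
    by (subst avg_cmult[symmetric]) (simp add: mult.commute)
  also have "\<dots> \<le> exp (s\<^sup>2 * (c x)\<^sup>2 / 8) * exp (s\<^sup>2 * (\<Sum>v\<in>S. (c v)\<^sup>2) / 8)"
    by (intro mult_left_mono IH) auto
  also have "\<dots> = exp (s\<^sup>2 * (\<Sum>v\<in>insert x S. (c v)\<^sup>2) / 8)"
    using insert.hyps by (simp add: exp_add[symmetric] algebra_simps add_divide_distrib)
  finally show ?case .
qed

lemma mcdiarmid_tail:
  fixes B :: "'a \<Rightarrow> 'b set" and g :: "('a \<Rightarrow> 'b) \<Rightarrow> real" and c :: "'a \<Rightarrow> real"
  assumes "finite S" "\<And>x. x \<in> S \<Longrightarrow> finite (B x) \<and> B x \<noteq> {}" "s \<ge> 0"
    "\<And>f x y. f \<in> PiE_dflt S d B \<Longrightarrow> x \<in> S \<Longrightarrow> y \<in> B x \<Longrightarrow> \<bar>g (f(x := y)) - g f\<bar> \<le> c x"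
  shows "real (card {f \<in> PiE_dflt S d B. g f \<ge> avg (PiE_dflt S d B) g + t})
           / real (card (PiE_dflt S d B))
         \<le> exp (s\<^sup>2 * (\<Sum>x\<in>S. (c x)\<^sup>2) / 8 - s * t)"
proof -
  define \<Omega> where "\<Omega> = PiE_dflt S d B"
  define A where "A = avg \<Omega> g"
  have "finite \<Omega>" unfolding \<Omega>_def using assms(1,2) by (intro finite_PiE_dflt) auto
  hence "real (card {f \<in> \<Omega>. g f \<ge> A + t}) / real (card \<Omega>)
         = avg \<Omega> (\<lambda>f. if g f \<ge> A + t then 1 else 0)"
    unfolding avg_def by (simp add: sum.If_cases Int_def)
  also have "\<dots> \<le> avg \<Omega> (\<lambda>f. exp (s * (g f - A)) * exp (- s * t))"
  proof (intro avg_mono)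
    fix f
    have "g f \<ge> A + t \<Longrightarrow> 1 \<le> exp (s * (g f - A - t))" using assms(3) by simp
    thus "(if g f \<ge> A + t then 1 else 0) \<le> exp (s * (g f - A)) * exp (- s * t)"
      by (simp add: exp_add[symmetric] algebra_simps)
  qed
  also have "\<dots> = exp (- s * t) * avg \<Omega> (\<lambda>f. exp (s * (g f - A)))"
    by (subst avg_cmult[symmetric]) (simp add: mult.commute)
  also have "\<dots> \<le> exp (- s * t) * exp (s\<^sup>2 * (\<Sum>x\<in>S. (c x)\<^sup>2) / 8)"
    unfolding A_def \<Omega>_def by (intro mult_left_mono mcdiarmid_mgf_bound assms) auto
  also have "\<dots> = exp (s\<^sup>2 * (\<Sum>x\<in>S. (c x)\<^sup>2) / 8 - s * t)"
    by (simp add: exp_add[symmetric])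
  finally show ?thesis unfolding \<Omega>_def A_def .
qed

lemma card_PiE_dflt_agree_on_le:
  assumes "finite S" "F \<subseteq> S" "0 < m" "\<And>x. x \<in> S \<Longrightarrow> finite (B x) \<and> m \<le> real (card (B x))"
  shows "real (card {f \<in> PiE_dflt S d B. \<forall>x\<in>F. f x = t x}) / real (card (PiE_dflt S d B))
         \<le> (1 / m) ^ card F"
proof -
  define B' where "B' = (\<lambda>x. if x \<in> F then B x \<inter> {t x} else B x)"
  have cardB: "real (card (B x)) > 0" if "x \<in> S" for x
    using assms(3) assms(4)[OF that] by linarith
  have "{f \<in> PiE_dflt S d B. \<forall>x\<in>F. f x = t x} = PiE_dflt S d B'"
    unfolding PiE_dflt_def B'_def using assms(2) by auto
  hence "real (card {f \<in> PiE_dflt S d B. \<forall>x\<in>F. f x = t x}) / real (card (PiE_dflt S d B))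
         = (\<Prod>x\<in>S. real (card (B' x)) / real (card (B x)))"
    using assms(1,4) by (simp add: card_PiE_dflt B'_def prod_dividef)
  also have "\<dots> \<le> (\<Prod>x\<in>S. if x \<in> F then 1 / m else 1)"
  proof (intro prod_mono conjI)
    fix x assume x: "x \<in> S"
    show "0 \<le> real (card (B' x)) / real (card (B x))" by simp
    have "card (B' x) \<le> 1" if "x \<in> F"
      using that card_mono[of "{t x}" "B x \<inter> {t x}"] unfolding B'_def by auto
    hence "x \<in> F \<Longrightarrow> real (card (B' x)) / real (card (B x)) \<le> 1 / real (card (B x))"
      using cardB[OF x] by (intro divide_right_mono) auto
    moreover have "1 / real (card (B x)) \<le> 1 / m"
      using assms(3) assms(4)[OF x] by (intro divide_left_mono) auto
    ultimately show "real (card (B' x)) / real (card (B x)) \<le> (if x \<in> F then 1 / m else 1)"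
      using cardB[OF x] by (auto simp: B'_def)
  qed
  also have "\<dots> = (1 / m) ^ card F"
    using assms(1,2) by (simp add: prod.If_cases Int_absorb1)
  finally show ?thesis .
qed

lemma abs_card_filter_diff_le:
  assumes "finite S"
  shows "\<bar>real (card {x\<in>S. P x}) - real (card {x\<in>S. Q x})\<bar> \<le> real (card {x\<in>S. P x \<noteq> Q x})"
proof -
  have "card {x\<in>S. P x} \<le> card ({x\<in>S. Q x} \<union> {x\<in>S. P x \<noteq> Q x})"
       "card {x\<in>S. Q x} \<le> card ({x\<in>S. P x} \<union> {x\<in>S. P x \<noteq> Q x})"
    using assms by (auto intro!: card_mono)
  moreover have "card ({x\<in>S. Q x} \<union> {x\<in>S. P x \<noteq> Q x}) \<le> card {x\<in>S. Q x} + card {x\<in>S. P x \<noteq> Q x}"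
    "card ({x\<in>S. P x} \<union> {x\<in>S. P x \<noteq> Q x}) \<le> card {x\<in>S. P x} + card {x\<in>S. P x \<noteq> Q x}"
    by (rule card_Un_le)+
  ultimately show ?thesis by linarith
qed
section \<open>Arcs of \<open>D\<^sub>\<sigma>\<close> and the edges they own\<close>

lemma zpar_qpar_bounds:
  assumes "1 \<le> l" "2 * l < k"
  shows "2 \<le> zpar k l" "k - l \<le> qpar k l" "qpar k l < k" "k < 2 * qpar k l"
    "2 \<le> qpar k l"
proof -
  define x where "x = real (k - l) / real l"
  have lpos: "real l > 0" using assms by simp
  have kl: "real (k - l) = real k - real l" using assms by simp
  have x1: "x > 1" unfolding x_def using assms lpos kl by (simp add: field_simps)
  have z: "real (zpar k l) = real_of_int \<lceil>x\<rceil>" unfolding zpar_def x_def[symmetric]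
    using x1 by (simp add: of_nat_nat)
  have c1: "x \<le> real (zpar k l)" using z by simp
  have c2: "real (zpar k l) < x + 1" using z by linarith
  have "real l * x = real k - real l" unfolding x_def using lpos kl by simp
  hence lz1: "real k - real l \<le> real l * real (zpar k l)" using c1 lpos
    by (metis mult_left_mono less_imp_le)
  have lz2: "real l * real (zpar k l) < real k"
  proof -
    have "real l * real (zpar k l) < real l * (x + 1)" using c2 lpos by (rule mult_strict_left_mono)
    thus ?thesis using \<open>real l * x = real k - real l\<close> by (simp add: distrib_left)
  qed
  have "real (zpar k l) > 1" using c1 x1 by simp
  thus z2: "2 \<le> zpar k l" by linarith
  show "k - l \<le> qpar k l" using lz1 kl unfolding qpar_def by (simp flip: of_nat_mult)
  show "qpar k l < k" using lz2 unfolding qpar_def by (simp flip: of_nat_mult)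
  show "k < 2 * qpar k l" using lz1 assms unfolding qpar_def by (simp flip: of_nat_mult)
  show "2 \<le> qpar k l" using mult_le_mono[OF assms(1) z2] unfolding qpar_def by simp
qed

text \<open>For the arc from the \<open>a\<close>-th to the \<open>b\<close>-th \<open>q\<close>-tuple of \<open>\<sigma>\<close>, the edge \<open>e\<^sub>i\<close> is the image under
  \<open>\<sigma>\<close> of the last \<open>q - il\<close> positions of block \<open>a\<close> and the first \<open>il + k - q\<close> positions of block \<open>b\<close>.\<close>

definition edge_pos :: "nat \<Rightarrow> nat \<Rightarrow> nat \<Rightarrow> nat \<Rightarrow> nat \<Rightarrow> nat set" where
  "edge_pos k l a b i = {a * qpar k l + i * l + 1 .. a * qpar k l + qpar k l} \<union>
                  {b * qpar k l + 1 .. b * qpar k l + i * l + k - qpar k l}"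

lemma mult_l_add_l_le_qpar:
  assumes "i < zpar k l"
  shows "i * l + l \<le> qpar k l"
proof -
  have "(i + 1) * l \<le> zpar k l * l" using assms by (intro mult_right_mono) simp_all
  thus ?thesis by (simp add: qpar_def mult.commute)
qed

lemma eseg_tup:
  assumes "1 \<le> l" "2 * l < k" "i < zpar k l"
  shows "eseg k l (tup k l \<sigma> a) (tup k l \<sigma> b) i = \<sigma> ` edge_pos k l a b i"
proof -
  define q where "q = qpar k l"
  note pr = zpar_qpar_bounds[OF assms(1,2), folded q_def]
  have ib: "i * l + l \<le> q" using mult_l_add_l_le_qpar[OF assms(3)] q_def by simp
  define P where "P = [a*q+1..<a*q+q+1] @ [b*q+1..<b*q+q+1]"
  have tt: "tup k l \<sigma> a @ tup k l \<sigma> b = map \<sigma> P" unfolding tup_def P_def q_def by simp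
  have lenP: "length P = 2 * q" unfolding P_def by simp
  have pn: "P ! m = (if m < q then a*q+1+m else b*q+1+(m-q))" if "m < 2 * q" for m
    unfolding P_def using that by (auto simp: nth_append)
  have jb: "i * l + j < 2 * q" if "j < k" for j using that ib pr(2) by linarith
  have "eseg k l (tup k l \<sigma> a) (tup k l \<sigma> b) i = \<sigma> ` ((\<lambda>j. P ! (i*l+j)) ` {0..<k})"
    unfolding eseg_def tt using jb lenP by (auto simp: image_iff)
  also have "(\<lambda>j. P ! (i*l+j)) ` {0..<k} = edge_pos k l a b i"
  proof (intro equalityI subsetI)
    fix x assume "x \<in> (\<lambda>j. P ! (i*l+j)) ` {0..<k}"
    then obtain j where j: "j < k" "x = P ! (i*l+j)" by auto
    show "x \<in> edge_pos k l a b i"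
      using j jb[OF j(1)] pr ib pn[OF jb[OF j(1)]] unfolding edge_pos_def q_def[symmetric] by auto
  next
    fix x assume x: "x \<in> edge_pos k l a b i"
    show "x \<in> (\<lambda>j. P ! (i*l+j)) ` {0..<k}"
    proof (cases "x \<le> a * q + q \<and> a * q + i * l + 1 \<le> x")
      case True
      define j where "j = x - (a*q + i*l + 1)"
      have "j < k" using True ib pr unfolding j_def by linarith
      moreover have "x = P ! (i*l+j)"
        using True pn[OF jb[OF \<open>j < k\<close>]] ib unfolding j_def by auto
      ultimately show ?thesis by auto
    next
      case False
      hence x2: "b*q + 1 \<le> x" "x \<le> b * q + i * l + k - q" using x unfolding edge_pos_def q_def by auto
      define j where "j = x - (b*q + 1) + q - i*l"
      have "j < k" using x2 ib pr unfolding j_def by linarith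
      moreover have "x = P ! (i*l+j)"
        using x2 ib pn[OF jb[OF \<open>j < k\<close>]] pr unfolding j_def by auto
      ultimately show ?thesis by auto
    qed
  qed
  finally show ?thesis .
qed

lemma block_index_unique:
  fixes q :: nat
  assumes "a * q < x" "x \<le> a * q + q" "b * q < x" "x \<le> b * q + q"
  shows "a = b"
proof (rule ccontr)
  assume "a \<noteq> b"
  then consider "a + 1 \<le> b" | "b + 1 \<le> a" by linarith
  thus False
  proof cases
    case 1 hence "(a+1) * q \<le> b * q" by (rule mult_right_mono) simp
    thus False using assms by (simp add: algebra_simps)
  next
    case 2 hence "(b+1) * q \<le> a * q" by (rule mult_right_mono) simp
    thus False using assms by (simp add: algebra_simps)
  qed
qed

lemma edge_pos_eq_imp_same_blocks:
  assumes "1 \<le> l" "2 * l < k" "i1 < zpar k l" "i2 < zpar k l" "a1 \<noteq> b1" "a2 \<noteq> b2"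
    and eq: "edge_pos k l a1 b1 i1 = edge_pos k l a2 b2 i2"
  shows "a1 = a2 \<and> b1 = b2"
proof -
  define q where "q = qpar k l"
  note pr = zpar_qpar_bounds[OF assms(1,2), folded q_def]
  have ib1: "i1 * l + l \<le> q" using mult_l_add_l_le_qpar[OF assms(3)] q_def by simp
  have ib2: "i2 * l + l \<le> q" using mult_l_add_l_le_qpar[OF assms(4)] q_def by simp
  have W: "x \<in> edge_pos k l a b i \<longleftrightarrow> (a*q + i*l < x \<and> x \<le> a*q+q) \<or> (b*q < x \<and> x \<le> b*q + i*l + k - q)" for x a b i
    unfolding edge_pos_def q_def by auto
  have x1: "a1*q + q \<in> edge_pos k l a2 b2 i2" unfolding eq[symmetric] W using ib1 assms(1) by auto
  have x2: "b1*q + 1 \<in> edge_pos k l a2 b2 i2" unfolding eq[symmetric] W using pr by auto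
  have c1: "a1 = a2 \<or> (a1 = b2 \<and> q \<le> i2*l + k - q)"
  proof -
    from x1[unfolded W] show ?thesis
    proof
      assume "a2*q + i2*l < a1*q+q \<and> a1*q+q \<le> a2*q+q"
      hence "a1 = a2" using block_index_unique[of a1 q "a1*q+q" a2] ib2 assms(1) pr by auto
      thus ?thesis by simp
    next
      assume h: "b2*q < a1*q+q \<and> a1*q+q \<le> b2*q + i2*l + k - q"
      have "i2*l + k \<le> 2*q" using ib2 pr by linarith
      hence "a1*q+q \<le> b2*q+q" using h by linarith
      hence "a1 = b2" using block_index_unique[of a1 q "a1*q+q" b2] h pr by auto
      moreover have "q \<le> i2*l + k - q" using h pr unfolding \<open>a1 = b2\<close> by linarith
      ultimately show ?thesis by simp
    qed
  qed
  have c2: "(b1 = a2 \<and> i2 * l = 0) \<or> b1 = b2"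
  proof -
    from x2[unfolded W] show ?thesis
    proof
      assume h: "a2*q + i2*l < b1*q+1 \<and> b1*q+1 \<le> a2*q+q"
      hence "b1 = a2" using block_index_unique[of b1 q "b1*q+1" a2] pr by auto
      thus ?thesis using h by simp
    next
      assume h: "b2*q < b1*q+1 \<and> b1*q+1 \<le> b2*q + i2*l + k - q"
      have "i2*l + k \<le> 2*q" using ib2 pr by linarith
      hence "b1*q+1 \<le> b2*q+q" using h by linarith
      hence "b1 = b2" using block_index_unique[of b1 q "b1*q+1" b2] h pr by auto
      thus ?thesis by simp
    qed
  qed
  show ?thesis using c1 c2 assms(5,6) pr by auto
qed

lemma edge_pos_inj:
  assumes "1 \<le> l" "2 * l < k" "i1 < zpar k l" "i2 < zpar k l" "a \<noteq> b"
    and eq: "edge_pos k l a b i1 = edge_pos k l a b i2"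
  shows "i1 = i2"
proof -
  define q where "q = qpar k l"
  note pr = zpar_qpar_bounds[OF assms(1,2), folded q_def]
  have ib1: "i1 * l + l \<le> q" using mult_l_add_l_le_qpar[OF assms(3)] q_def by simp
  have ib2: "i2 * l + l \<le> q" using mult_l_add_l_le_qpar[OF assms(4)] q_def by simp
  have W: "x \<in> edge_pos k l a b i \<longleftrightarrow> (a*q + i*l < x \<and> x \<le> a*q+q) \<or> (b*q < x \<and> x \<le> b*q + i*l + k - q)" for x i
    unfolding edge_pos_def q_def by auto
  have le: "i' * l \<le> i * l" if "edge_pos k l a b i = edge_pos k l a b i'" "i * l + l \<le> q" "i' * l + l \<le> q" for i i'
  proof -
    have "a*q + i*l + 1 \<in> edge_pos k l a b i'" unfolding that(1)[symmetric] W using that(2) assms(1) by auto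
    from this[unfolded W] show ?thesis
    proof
      assume "b*q < a*q + i*l + 1 \<and> a*q + i*l + 1 \<le> b*q + i'*l + k - q"
      hence "a = b" using block_index_unique[of a q "a*q + i*l + 1" b] that pr assms(1) by auto
      thus ?thesis using assms(5) by simp
    qed linarith
  qed
  have "i1 * l = i2 * l" using le[OF eq ib1 ib2] le[OF eq[symmetric] ib2 ib1] by linarith
  thus ?thesis using assms(1) by simp
qed

lemma edge_pos_subset:
  assumes "1 \<le> l" "2 * l < k" "i < zpar k l" "qpar k l dvd n" "a < n div qpar k l" "b < n div qpar k l"
  shows "edge_pos k l a b i \<subseteq> {1..n}"
proof -
  define q where "q = qpar k l"
  note pr = zpar_qpar_bounds[OF assms(1,2), folded q_def]
  have ib: "i * l + l \<le> q" using mult_l_add_l_le_qpar[OF assms(3)] q_def by simp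
  have n: "n = (n div q) * q" using assms(4) q_def by simp
  have "a + 1 \<le> n div q" "b + 1 \<le> n div q" using assms(5,6) q_def by auto
  hence "(a+1) * q \<le> n" "(b+1)*q \<le> n" using n by (metis mult_le_mono1)+
  thus ?thesis unfolding edge_pos_def q_def[symmetric] using ib pr by auto
qed

lemma edge_pos_subset_blocks:
  assumes "1 \<le> l" "2 * l < k" "i < zpar k l"
  shows "edge_pos k l a b i \<subseteq> {a * qpar k l + 1 .. a * qpar k l + qpar k l} \<union> {b * qpar k l + 1 .. b * qpar k l + qpar k l}"
proof -
  define q where "q = qpar k l"
  note pr = zpar_qpar_bounds[OF assms(1,2), folded q_def]
  have ib: "i * l + l \<le> q" using mult_l_add_l_le_qpar[OF assms(3)] q_def by simp
  show ?thesis unfolding edge_pos_def q_def[symmetric] using ib pr by auto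
qed

lemma arcsE:
  assumes "1 \<le> l" "2 * l < k" "\<alpha> \<in> arcs k l n H \<sigma>"
  obtains a b where "\<alpha> = (tup k l \<sigma> a, tup k l \<sigma> b)" "a < n div qpar k l" "b < n div qpar k l" "a \<noteq> b"
     "\<And>i. i < zpar k l \<Longrightarrow> \<sigma> ` edge_pos k l a b i \<in> H"
     "owned k l \<alpha> = {\<sigma> ` edge_pos k l a b i | i. i < zpar k l}"
proof -
  from assms(3) obtain a b where ab: "\<alpha> = (tup k l \<sigma> a, tup k l \<sigma> b)" "a < n div qpar k l" "b < n div qpar k l"
    "tup k l \<sigma> a \<noteq> tup k l \<sigma> b" "precedes k l H (tup k l \<sigma> a) (tup k l \<sigma> b)"
    unfolding arcs_def by auto
  have "a \<noteq> b" using ab(4) by auto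
  moreover have "\<And>i. i < zpar k l \<Longrightarrow> \<sigma> ` edge_pos k l a b i \<in> H"
    using ab(5) eseg_tup[OF assms(1,2)] unfolding precedes_def by metis
  moreover have "owned k l \<alpha> = {\<sigma> ` edge_pos k l a b i | i. i < zpar k l}"
    unfolding owned_def ab(1) using eseg_tup[OF assms(1,2)] by fastforce
  ultimately show ?thesis using that ab by blast
qed

lemma owner_arc_unique:
  assumes "1 \<le> l" "2 * l < k" "qpar k l dvd n" "\<sigma> permutes {1..n}"
    "\<alpha>1 \<in> arcs k l n H \<sigma>" "\<alpha>2 \<in> arcs k l n H \<sigma>" "e \<in> owned k l \<alpha>1" "e \<in> owned k l \<alpha>2"
  shows "\<alpha>1 = \<alpha>2"
proof -
  have inj: "inj_on \<sigma> {1..n}" using assms(4) by (meson bij_betw_imp_inj_on permutes_imp_bij)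
  obtain a1 b1 where 1: "\<alpha>1 = (tup k l \<sigma> a1, tup k l \<sigma> b1)" "a1 < n div qpar k l" "b1 < n div qpar k l"
     "a1 \<noteq> b1" "owned k l \<alpha>1 = {\<sigma> ` edge_pos k l a1 b1 i | i. i < zpar k l}"
    by (rule arcsE[OF assms(1,2,5)]) blast
  obtain a2 b2 where 2: "\<alpha>2 = (tup k l \<sigma> a2, tup k l \<sigma> b2)" "a2 < n div qpar k l" "b2 < n div qpar k l"
     "a2 \<noteq> b2" "owned k l \<alpha>2 = {\<sigma> ` edge_pos k l a2 b2 i | i. i < zpar k l}"
    by (rule arcsE[OF assms(1,2,6)]) blast
  obtain i1 where i1: "i1 < zpar k l" "e = \<sigma> ` edge_pos k l a1 b1 i1" using assms(7) unfolding 1(5) by blast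
  obtain i2 where i2: "i2 < zpar k l" "e = \<sigma> ` edge_pos k l a2 b2 i2" using assms(8) unfolding 2(5) by blast
  have "\<sigma> ` edge_pos k l a1 b1 i1 = \<sigma> ` edge_pos k l a2 b2 i2" using i1(2) i2(2) by (rule trans[OF sym])
  hence "edge_pos k l a1 b1 i1 = edge_pos k l a2 b2 i2"
    by (subst (asm) inj_on_image_eq_iff[OF inj edge_pos_subset[OF assms(1,2) i1(1) assms(3) 1(2,3)]
                                           edge_pos_subset[OF assms(1,2) i2(1) assms(3) 2(2,3)]])
  from edge_pos_eq_imp_same_blocks[OF assms(1,2) i1(1) i2(1) 1(4) 2(4) this] have "a1 = a2" "b1 = b2" by auto
  thus ?thesis using 1(1) 2(1) by simp
qed

lemma card_owned:
  assumes "1 \<le> l" "2 * l < k" "qpar k l dvd n" "\<sigma> permutes {1..n}" "\<alpha> \<in> arcs k l n H \<sigma>"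
  shows "card (owned k l \<alpha>) = zpar k l"
proof -
  have inj: "inj_on \<sigma> {1..n}" using assms(4) by (meson bij_betw_imp_inj_on permutes_imp_bij)
  obtain a b where ab: "a < n div qpar k l" "b < n div qpar k l" "a \<noteq> b"
     "owned k l \<alpha> = {\<sigma> ` edge_pos k l a b i | i. i < zpar k l}"
    by (rule arcsE[OF assms(1,2,5)]) blast
  have eq: "owned k l \<alpha> = (\<lambda>i. \<sigma> ` edge_pos k l a b i) ` {..<zpar k l}" using ab(4) by auto
  have "inj_on (\<lambda>i. \<sigma> ` edge_pos k l a b i) {..<zpar k l}"
  proof (rule inj_onI)
    fix i1 i2 assume i: "i1 \<in> {..<zpar k l}" "i2 \<in> {..<zpar k l}" "\<sigma> ` edge_pos k l a b i1 = \<sigma> ` edge_pos k l a b i2"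
    hence "edge_pos k l a b i1 = edge_pos k l a b i2"
      using inj_on_image_eq_iff[OF inj edge_pos_subset[OF assms(1,2) _ assms(3) ab(1,2)] edge_pos_subset[OF assms(1,2) _ assms(3) ab(1,2)]]
      by auto
    thus "i1 = i2" using edge_pos_inj[OF assms(1,2) _ _ ab(3)] i by auto
  qed
  thus ?thesis unfolding eq by (simp add: card_image)
qed

lemma owned_in_graph:
  assumes "1 \<le> l" "2 * l < k" "\<alpha> \<in> arcs k l n H \<sigma>" "e \<in> owned k l \<alpha>"
  shows "e \<in> H"
proof -
  obtain a b where ab: "\<And>i. i < zpar k l \<Longrightarrow> \<sigma> ` edge_pos k l a b i \<in> H"
     "owned k l \<alpha> = {\<sigma> ` edge_pos k l a b i | i. i < zpar k l}"
    by (rule arcsE[OF assms(1,2,3)]) blast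
  obtain i where "i < zpar k l" "e = \<sigma> ` edge_pos k l a b i" using assms(4) unfolding ab(2) by blast
  thus ?thesis using ab(1) by simp
qed

lemma card_Un_owned_le:
  assumes "1 \<le> l" "2 * l < k" "\<alpha> \<in> arcs k l n H \<sigma>" "e1 \<in> owned k l \<alpha>" "e2 \<in> owned k l \<alpha>"
  shows "card (e1 \<union> e2) \<le> 2 * qpar k l"
proof -
  obtain a b where ab: "owned k l \<alpha> = {\<sigma> ` edge_pos k l a b i | i. i < zpar k l}"
    by (rule arcsE[OF assms(1,2,3)]) blast
  define Z where "Z = {a * qpar k l + 1 .. a * qpar k l + qpar k l} \<union> {b * qpar k l + 1 .. b * qpar k l + qpar k l}"
  obtain i1 where i1: "i1 < zpar k l" "e1 = \<sigma> ` edge_pos k l a b i1" using assms(4) unfolding ab by blast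
  obtain i2 where i2: "i2 < zpar k l" "e2 = \<sigma> ` edge_pos k l a b i2" using assms(5) unfolding ab by blast
  have "e1 \<subseteq> \<sigma> ` Z" unfolding i1(2) Z_def by (rule image_mono[OF edge_pos_subset_blocks[OF assms(1,2) i1(1)]])
  moreover have "e2 \<subseteq> \<sigma> ` Z" unfolding i2(2) Z_def by (rule image_mono[OF edge_pos_subset_blocks[OF assms(1,2) i2(1)]])
  ultimately have "e1 \<union> e2 \<subseteq> \<sigma> ` Z" by (rule Un_least)
  hence "card (e1 \<union> e2) \<le> card (\<sigma> ` Z)" by (intro card_mono) (auto simp: Z_def)
  also have "\<dots> \<le> card Z" by (rule card_image_le) (simp add: Z_def)
  also have "\<dots> \<le> qpar k l + qpar k l" unfolding Z_def by (rule order_trans[OF card_Un_le]) simp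
  finally show ?thesis by simp
qed


lemma finite_arcs: "finite (arcs k l n H \<sigma>)"
proof -
  have "arcs k l n H \<sigma> \<subseteq> (\<lambda>(a,b). (tup k l \<sigma> a, tup k l \<sigma> b)) ` ({..<n div qpar k l} \<times> {..<n div qpar k l})"
    unfolding arcs_def by auto
  thus ?thesis by (rule finite_subset) simp
qed


section \<open>The labelling of Step (3)\<close>

text \<open>The data of the theorem for one \<open>n\<close>, with the outcome of Steps (1)--(2) fixed;
  \<open>I\<^sub>m\<^sub>i\<^sub>n\<close>, \<open>I\<^sub>m\<^sub>a\<^sub>x\<close> stand for \<open>(1 \<mp> (z+2)\<epsilon>)\<kappa>\<close>.\<close>

locale fixed_permutations =
  fixes k l n :: nat and H :: "nat set set" and \<sigma>s :: "nat \<Rightarrow> nat \<Rightarrow> nat" and r d :: nat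
    and A1 A2 :: "nat set" and Bs :: "nat set set" and Imin Imax :: real
  assumes kl: "1 \<le> l" "2 * l < k"
    and n_dvd: "qpar k l dvd n"
    and H_kgraph: "kgraph k n H"
    and perm: "\<And>i. i < r \<Longrightarrow> \<sigma>s i permutes {1..n}"
    and I_lo: "\<And>e. e \<in> H \<Longrightarrow> Imin \<le> real (card (Iset k l n H \<sigma>s r e))"
    and I_hi: "\<And>e. e \<in> H \<Longrightarrow> real (card (Iset k l n H \<sigma>s r e)) \<le> Imax"
    and Imin_pos: "0 < Imin"
    and few_condensed: "\<And>S t. S \<subseteq> {1..n} \<Longrightarrow> 1 \<le> t \<Longrightarrow> t \<le> 2 * qpar k l - k \<Longrightarrow>
        card S = k + t \<Longrightarrow> card {i. i < r \<and> condensed k l n H (\<sigma>s i) S} \<le> 4 * qpar k l + 1"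
    and d_range: "1 \<le> d \<and> d \<le> l"
    and A_sets: "A1 \<subseteq> {1..n} \<and> card A1 = k - d \<and> A2 \<subseteq> {1..n} \<and> card A2 = k - d \<and> A1 \<noteq> A2"
    and B_sets: "\<And>B. B \<in> Bs \<Longrightarrow> B \<subseteq> {1..n} \<and> card B = d \<and> A1 \<union> B \<in> H \<and> A2 \<union> B \<in> H"
begin

abbreviation "z \<equiv> zpar k l"
abbreviation "q \<equiv> qpar k l"
abbreviation "I \<equiv> Iset k l n H \<sigma>s r"

definition "labelled = {e \<in> H. I e \<noteq> {}}"
definition "\<Omega> = PiE_dflt labelled 0 I"
definition "covered lab = (\<Union>i<r. Hprime k l n H \<sigma>s lab i)"
definition "N lab = card {B \<in> Bs. A1 \<union> B \<in> covered lab \<and> A2 \<union> B \<in> covered lab}"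

lemma finite_H: "finite H"
proof -
  have "H \<subseteq> Pow {1..n}" using H_kgraph unfolding kgraph_def by auto
  thus ?thesis by (rule finite_subset) simp
qed

lemma finite_Bs: "finite Bs"
proof -
  have "Bs \<subseteq> Pow {1..n}" using B_sets by auto
  thus ?thesis by (rule finite_subset) simp
qed

lemma finite_I: "finite (I e)" and I_subset: "I e \<subseteq> {..<r}"
  unfolding Iset_def by auto

lemma finite_labelled: "finite labelled"
  unfolding labelled_def using finite_H by simp

lemma finite_\<Omega>: "finite \<Omega>"
  unfolding \<Omega>_def using finite_labelled finite_I by (intro finite_PiE_dflt) auto

lemma \<Omega>_nonempty: "\<Omega> \<noteq> {}"
  unfolding \<Omega>_def labelled_def by simp

lemma card_\<Omega>_pos: "real (card \<Omega>) > 0"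
  using finite_\<Omega> \<Omega>_nonempty by (simp add: card_gt_0_iff)

lemma prob_label_pmf:
  "measure_pmf.prob (label_pmf k l n H \<sigma>s r) {lab. P lab}
   = real (card {lab \<in> \<Omega>. P lab}) / real (card \<Omega>)"
proof -
  have "label_pmf k l n H \<sigma>s r = pmf_of_set \<Omega>"
    unfolding label_pmf_def \<Omega>_def labelled_def
    by (rule Pi_pmf_of_set) (use finite_H finite_I in auto)
  thus ?thesis using measure_pmf_of_set[OF \<Omega>_nonempty finite_\<Omega>, of "{lab. P lab}"]
    by (simp add: Int_def)
qed

lemma label_in_I: "lab \<in> \<Omega> \<Longrightarrow> f \<in> labelled \<Longrightarrow> lab f \<in> I f"
  unfolding \<Omega>_def PiE_dflt_def by auto

lemma covered_iff:
  "e \<in> covered lab \<longleftrightarrow>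
   (\<exists>i<r. \<exists>\<alpha>\<in>arcs k l n H (\<sigma>s i). (\<forall>e'\<in>owned k l \<alpha>. lab e' = i) \<and> e \<in> owned k l \<alpha>)"
  unfolding covered_def Hprime_def by blast

lemma owned_labelled:
  assumes "i < r" "\<alpha> \<in> arcs k l n H (\<sigma>s i)" "e \<in> owned k l \<alpha>"
  shows "e \<in> labelled" "i \<in> I e"
proof -
  have "e \<in> H" by (rule owned_in_graph[OF kl assms(2,3)])
  moreover show "i \<in> I e" using assms unfolding Iset_def Hsub_def by blast
  ultimately show "e \<in> labelled" unfolding labelled_def by auto
qed

lemma card_owned_eq: "i < r \<Longrightarrow> \<alpha> \<in> arcs k l n H (\<sigma>s i) \<Longrightarrow> card (owned k l \<alpha>) = z"
  using card_owned[OF kl n_dvd perm] by blast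

lemma finite_owned: "i < r \<Longrightarrow> \<alpha> \<in> arcs k l n H (\<sigma>s i) \<Longrightarrow> finite (owned k l \<alpha>)"
  using card_owned_eq zpar_qpar_bounds(1)[OF kl] by (metis card.infinite not_numeral_le_zero)

lemma owner_unique:
  "i < r \<Longrightarrow> \<alpha> \<in> arcs k l n H (\<sigma>s i) \<Longrightarrow> \<alpha>' \<in> arcs k l n H (\<sigma>s i) \<Longrightarrow>
   e \<in> owned k l \<alpha> \<Longrightarrow> e \<in> owned k l \<alpha>' \<Longrightarrow> \<alpha> = \<alpha>'"
  using owner_arc_unique[OF kl n_dvd perm] by blast

lemma A_B_disjoint:
  assumes "B \<in> Bs" "A = A1 \<or> A = A2"
  shows "A \<inter> B = {}"
proof -
  have fA: "finite A" "card A = k - d" using A_sets assms(2) finite_subset[of _ "{1..n}"] by auto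
  have fB: "finite B" "card B = d" using B_sets[OF assms(1)] finite_subset[of _ "{1..n}"] by auto
  have "A \<union> B \<in> H" using B_sets[OF assms(1)] assms(2) by auto
  hence "card (A \<union> B) = k" using H_kgraph unfolding kgraph_def by auto
  moreover have "card (A \<union> B) + card (A \<inter> B) = card A + card B" using card_Un_Int[OF fA(1) fB(1)] by simp
  moreover have "d < k" using d_range kl by simp
  ultimately have "card (A \<inter> B) = 0" using fA fB by simp
  thus ?thesis using fA by simp
qed

lemma inj_on_union_A:
  assumes "A = A1 \<or> A = A2"
  shows "inj_on (\<lambda>B. A \<union> B) Bs"
proof (rule inj_onI)
  fix B B' assume "B \<in> Bs" "B' \<in> Bs" "A \<union> B = A \<union> B'"
  thus "B = B'" using A_B_disjoint[OF _ assms] by blast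
qed

lemma A1_union_neq_A2_union: "B \<in> Bs \<Longrightarrow> A1 \<union> B \<noteq> A2 \<union> B"
  using A_B_disjoint[of B A1] A_B_disjoint[of B A2] A_sets by blast

lemma covered_change:
  assumes "lab \<in> \<Omega>" "f \<in> labelled" "y \<in> I f"
    and ch: "(e \<in> covered (lab(f := y))) \<noteq> (e \<in> covered lab)"
  shows "\<exists>i<r. (i = lab f \<or> i = y) \<and>
           (\<exists>\<alpha>\<in>arcs k l n H (\<sigma>s i). f \<in> owned k l \<alpha> \<and> e \<in> owned k l \<alpha>)"
proof -
  have "\<exists>i<r. \<exists>\<alpha>\<in>arcs k l n H (\<sigma>s i). e \<in> owned k l \<alpha> \<and> f \<in> owned k l \<alpha> \<and>
          ((\<forall>e'\<in>owned k l \<alpha>. lab e' = i) \<or> (\<forall>e'\<in>owned k l \<alpha>. (lab(f := y)) e' = i))"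
  proof (cases "e \<in> covered lab")
    case True
    then obtain i \<alpha> where i: "i < r" "\<alpha> \<in> arcs k l n H (\<sigma>s i)" "e \<in> owned k l \<alpha>"
      "\<forall>e'\<in>owned k l \<alpha>. lab e' = i"
      unfolding covered_iff by blast
    moreover have "f \<in> owned k l \<alpha>"
      using i ch True unfolding covered_iff by (metis fun_upd_other)
    ultimately show ?thesis by blast
  next
    case False
    then obtain i \<alpha> where i: "i < r" "\<alpha> \<in> arcs k l n H (\<sigma>s i)" "e \<in> owned k l \<alpha>"
      "\<forall>e'\<in>owned k l \<alpha>. (lab(f := y)) e' = i"
      using ch unfolding covered_iff by blast
    moreover have "f \<in> owned k l \<alpha>"
      using i False unfolding covered_iff by (metis fun_upd_other)
    ultimately show ?thesis by blast
  qed
  thus ?thesis by fastforce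
qed

definition "influential A = {f. \<exists>B\<in>Bs. \<exists>i<r. \<exists>\<alpha>\<in>arcs k l n H (\<sigma>s i).
                                  A \<union> B \<in> owned k l \<alpha> \<and> f \<in> owned k l \<alpha>}"
definition "influential_edges = influential A1 \<union> influential A2"

lemma influential_edges_labelled: "influential_edges \<subseteq> labelled"
  unfolding influential_edges_def influential_def using owned_labelled(1) by blast

lemma card_co_owned_le:
  assumes "A = A1 \<or> A = A2" "i < r"
  shows "card {B \<in> Bs. \<exists>\<alpha>\<in>arcs k l n H (\<sigma>s i). f \<in> owned k l \<alpha> \<and> A \<union> B \<in> owned k l \<alpha>} \<le> z"
proof (cases "\<exists>\<alpha>\<in>arcs k l n H (\<sigma>s i). f \<in> owned k l \<alpha>")
  case False
  thus ?thesis by simp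
next
  case True
  then obtain \<alpha>0 where \<alpha>0: "\<alpha>0 \<in> arcs k l n H (\<sigma>s i)" "f \<in> owned k l \<alpha>0" by blast
  have "{B \<in> Bs. \<exists>\<alpha>\<in>arcs k l n H (\<sigma>s i). f \<in> owned k l \<alpha> \<and> A \<union> B \<in> owned k l \<alpha>}
        = {B \<in> Bs. A \<union> B \<in> owned k l \<alpha>0}"
    using owner_unique[OF assms(2) _ \<alpha>0(1) _ \<alpha>0(2)] \<alpha>0 by blast
  also have "card \<dots> \<le> card (owned k l \<alpha>0)"
    by (rule card_inj_on_le[OF inj_on_subset[OF inj_on_union_A[OF assms(1)]]])
       (auto intro: finite_owned[OF assms(2) \<alpha>0(1)])
  also have "\<dots> = z" by (rule card_owned_eq[OF assms(2) \<alpha>0(1)])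
  finally show ?thesis .
qed

lemma N_bounded_difference:
  assumes lab: "lab \<in> \<Omega>" and f: "f \<in> labelled" and y: "y \<in> I f"
  shows "\<bar>real (N (lab(f := y))) - real (N lab)\<bar> \<le> (if f \<in> influential_edges then 4 * real z else 0)"
proof -
  define S where "S = (\<lambda>A i. {B \<in> Bs. \<exists>\<alpha>\<in>arcs k l n H (\<sigma>s i). f \<in> owned k l \<alpha> \<and> A \<union> B \<in> owned k l \<alpha>})"
  define D where "D = S A1 (lab f) \<union> S A1 y \<union> (S A2 (lab f) \<union> S A2 y)"
  have lf: "lab f < r" "y < r" using label_in_I[OF lab f] y I_subset by auto
  define P where "P = (\<lambda>lab B. A1 \<union> B \<in> covered lab \<and> A2 \<union> B \<in> covered lab)"
  have changed_D: "{B\<in>Bs. P (lab(f := y)) B \<noteq> P lab B} \<subseteq> D"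
    using covered_change[OF lab f y, of "A1 \<union> _"] covered_change[OF lab f y, of "A2 \<union> _"]
    unfolding P_def D_def S_def by blast
  have "finite D" unfolding D_def S_def using finite_Bs by simp
  have "\<bar>real (N (lab(f := y))) - real (N lab)\<bar> \<le> real (card {B\<in>Bs. P (lab(f := y)) B \<noteq> P lab B})"
    unfolding N_def P_def by (rule abs_card_filter_diff_le[OF finite_Bs])
  also have "\<dots> \<le> real (card D)" using card_mono[OF \<open>finite D\<close> changed_D] by simp
  finally have "\<bar>real (N (lab(f := y))) - real (N lab)\<bar> \<le> real (card D)" .
  moreover have "card D \<le> 4 * z"
  proof -
    have "card D \<le> card (S A1 (lab f) \<union> S A1 y) + card (S A2 (lab f) \<union> S A2 y)"
      unfolding D_def by (rule card_Un_le)
    also have "\<dots> \<le> card (S A1 (lab f)) + card (S A1 y) + (card (S A2 (lab f)) + card (S A2 y))"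
      by (intro add_mono card_Un_le)
    also have "\<dots> \<le> z + z + (z + z)"
      unfolding S_def by (intro add_mono card_co_owned_le) (use lf in auto)
    finally show ?thesis by simp
  qed
  moreover have "D = {}" if "f \<notin> influential_edges"
    using that lf unfolding D_def S_def influential_edges_def influential_def by blast
  ultimately show ?thesis by (cases "f \<in> influential_edges") simp_all
qed

lemma card_owned_union_through_le:
  assumes "i < r"
  shows "card (\<Union>{owned k l \<alpha> | \<alpha>. \<alpha> \<in> arcs k l n H (\<sigma>s i) \<and> e \<in> owned k l \<alpha>}) \<le> z"
proof (cases "\<exists>\<alpha>\<in>arcs k l n H (\<sigma>s i). e \<in> owned k l \<alpha>")
  case False
  hence "{owned k l \<alpha> | \<alpha>. \<alpha> \<in> arcs k l n H (\<sigma>s i) \<and> e \<in> owned k l \<alpha>} = {}" by blast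
  thus ?thesis by (simp only: Union_empty card.empty)
next
  case True
  then obtain \<alpha>0 where \<alpha>0: "\<alpha>0 \<in> arcs k l n H (\<sigma>s i)" "e \<in> owned k l \<alpha>0" by blast
  have "{owned k l \<alpha> | \<alpha>. \<alpha> \<in> arcs k l n H (\<sigma>s i) \<and> e \<in> owned k l \<alpha>} = {owned k l \<alpha>0}"
    using owner_unique[OF assms(1) _ \<alpha>0(1) _ \<alpha>0(2)] \<alpha>0 by blast
  thus ?thesis using card_owned_eq[OF assms \<alpha>0(1)] by simp
qed

lemma card_influential_le:
  assumes "A = A1 \<or> A = A2"
  shows "real (card (influential A)) \<le> real z * Imax * real (card Bs)"
proof -
  define F where "F = (\<lambda>B i. \<Union>{owned k l \<alpha> | \<alpha>. \<alpha> \<in> arcs k l n H (\<sigma>s i) \<and> A \<union> B \<in> owned k l \<alpha>})"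
  have AB: "A \<union> B \<in> H" if "B \<in> Bs" for B using B_sets[OF that] assms by auto
  have "influential A \<subseteq> (\<Union>B\<in>Bs. \<Union>i\<in>I (A \<union> B). F B i)"
  proof
    fix f assume "f \<in> influential A"
    then obtain B i \<alpha> where "B \<in> Bs" "i < r" "\<alpha> \<in> arcs k l n H (\<sigma>s i)"
      "A \<union> B \<in> owned k l \<alpha>" "f \<in> owned k l \<alpha>"
      unfolding influential_def by blast
    moreover have "i \<in> I (A \<union> B)" using owned_labelled(2)[OF calculation(2,3,4)] .
    ultimately show "f \<in> (\<Union>B\<in>Bs. \<Union>i\<in>I (A \<union> B). F B i)" unfolding F_def by blast
  qed
  moreover have "finite (F B i)" for B i
  proof -
    have "F B i \<subseteq> H" unfolding F_def using owned_in_graph[OF kl] by blast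
    thus ?thesis using finite_H finite_subset by blast
  qed
  ultimately have "card (influential A) \<le> card (\<Union>B\<in>Bs. \<Union>i\<in>I (A \<union> B). F B i)"
    by (intro card_mono) (use finite_Bs finite_I in auto)
  also have "\<dots> \<le> (\<Sum>B\<in>Bs. card (\<Union>i\<in>I (A \<union> B). F B i))"
    by (rule card_UN_le[OF finite_Bs])
  also have "\<dots> \<le> (\<Sum>B\<in>Bs. \<Sum>i\<in>I (A \<union> B). card (F B i))"
    by (intro sum_mono card_UN_le finite_I)
  also have "\<dots> \<le> (\<Sum>B\<in>Bs. \<Sum>i\<in>I (A \<union> B). z)"
    unfolding F_def by (intro sum_mono card_owned_union_through_le) (use I_subset in auto)
  finally have "real (card (influential A)) \<le> (\<Sum>B\<in>Bs. real z * real (card (I (A \<union> B))))"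
    by (simp add: of_nat_mono mult.commute flip: of_nat_sum of_nat_mult)
  also have "\<dots> \<le> (\<Sum>B\<in>Bs. real z * Imax)"
    by (intro sum_mono mult_left_mono I_hi AB) auto
  finally show ?thesis by (simp add: mult.commute)
qed

lemma card_influential_edges_le: "real (card influential_edges) \<le> 2 * real z * Imax * real (card Bs)"
  using card_Un_le[of "influential A1" "influential A2"] card_influential_le[of A1] card_influential_le[of A2]
  unfolding influential_edges_def by simp

lemma prob_agree_on_le:
  assumes "F \<subseteq> labelled"
  shows "real (card {lab \<in> \<Omega>. \<forall>f\<in>F. lab f = t f}) / real (card \<Omega>) \<le> (1 / Imin) ^ card F"
  unfolding \<Omega>_def
  by (rule card_PiE_dflt_agree_on_le[OF finite_labelled assms Imin_pos])
     (use I_lo finite_I in \<open>auto simp: labelled_def\<close>)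

definition "owners e = {(i, \<alpha>). i < r \<and> \<alpha> \<in> arcs k l n H (\<sigma>s i) \<and> e \<in> owned k l \<alpha>}"
definition "kept = (\<lambda>(i, \<alpha>). {lab \<in> \<Omega>. \<forall>f\<in>owned k l \<alpha>. lab f = i})"

lemma finite_owners: "finite (owners e)"
proof -
  have "owners e \<subseteq> {..<r} \<times> (\<Union>i<r. arcs k l n H (\<sigma>s i))" unfolding owners_def by auto
  thus ?thesis by (rule finite_subset) (auto intro: finite_arcs)
qed

lemma inj_on_fst_owners: "inj_on fst (owners e)"
proof (rule inj_onI)
  fix p p' assume p: "p \<in> owners e" "p' \<in> owners e" "fst p = fst p'"
  obtain i \<alpha> where 1: "p = (i, \<alpha>)" "i < r" "\<alpha> \<in> arcs k l n H (\<sigma>s i)" "e \<in> owned k l \<alpha>"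
    using p(1) unfolding owners_def by blast
  obtain \<alpha>' where 2: "p' = (i, \<alpha>')" "\<alpha>' \<in> arcs k l n H (\<sigma>s i)" "e \<in> owned k l \<alpha>'"
    using p(2,3) 1(1) unfolding owners_def by auto
  show "p = p'" using owner_unique[OF 1(2,3) 2(2) 1(4) 2(3)] 1(1) 2(1) by simp
qed

lemma card_owners_le: "e \<in> H \<Longrightarrow> real (card (owners e)) \<le> Imax"
proof -
  assume "e \<in> H"
  have "card (owners e) = card (fst ` owners e)" by (rule card_image[OF inj_on_fst_owners, symmetric])
  also have "\<dots> \<le> card (I e)"
    by (rule card_mono[OF finite_I]) (use owned_labelled(2) in \<open>force simp: owners_def\<close>)
  finally show ?thesis using I_hi[OF \<open>e \<in> H\<close>] by linarith
qed

text \<open>An arc owning two distinct edges \<open>e\<^sub>1, e\<^sub>2\<close> makes \<open>e\<^sub>1 \<union> e\<^sub>2\<close> condensed.\<close>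

lemma card_common_owners_le:
  assumes e: "e1 \<in> H" "e2 \<in> H" "e1 \<noteq> e2"
  shows "card (owners e1 \<inter> owners e2) \<le> 4 * q + 1"
proof (cases "owners e1 \<inter> owners e2 = {}")
  case False
  then obtain i0 \<alpha>0 where \<alpha>0: "\<alpha>0 \<in> arcs k l n H (\<sigma>s i0)" "e1 \<in> owned k l \<alpha>0" "e2 \<in> owned k l \<alpha>0"
    unfolding owners_def by auto
  define S where "S = e1 \<union> e2"
  have ck: "card e1 = k" "card e2 = k" "S \<subseteq> {1..n}"
    using e H_kgraph unfolding kgraph_def S_def by auto
  have fS: "finite S" using ck(3) by (rule finite_subset) simp
  have S2q: "card S \<le> 2 * q" unfolding S_def by (rule card_Un_owned_le[OF kl \<alpha>0])
  have "card S \<noteq> k"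
    using card_subset_eq[OF fS, of e1] card_subset_eq[OF fS, of e2] ck e(3) unfolding S_def by auto
  moreover have "k \<le> card S" using card_mono[OF fS, of e1] ck unfolding S_def by simp
  ultimately have Sk: "k + 1 \<le> card S" by simp
  have "card (owners e1 \<inter> owners e2) = card (fst ` (owners e1 \<inter> owners e2))"
    by (rule card_image[symmetric]) (rule inj_on_subset[OF inj_on_fst_owners], blast)
  also have "\<dots> \<le> card {i. i < r \<and> condensed k l n H (\<sigma>s i) S}"
  proof (rule card_mono)
    show "fst ` (owners e1 \<inter> owners e2) \<subseteq> {i. i < r \<and> condensed k l n H (\<sigma>s i) S}"
    proof
      fix i assume "i \<in> fst ` (owners e1 \<inter> owners e2)"
      then obtain \<alpha> where "i < r" "\<alpha> \<in> arcs k l n H (\<sigma>s i)" "e1 \<in> owned k l \<alpha>" "e2 \<in> owned k l \<alpha>"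
        unfolding owners_def by auto
      thus "i \<in> {i. i < r \<and> condensed k l n H (\<sigma>s i) S}"
        unfolding condensed_def S_def using e by blast
    qed
  qed simp
  also have "\<dots> \<le> 4 * q + 1"
    by (rule few_condensed[OF ck(3), of "card S - k"]) (use S2q Sk in auto)
  finally show ?thesis .
qed simp

lemma prob_kept_le:
  assumes "p \<in> owners e"
  shows "real (card (kept p)) / real (card \<Omega>) \<le> (1 / Imin) ^ z"
proof -
  obtain i \<alpha> where p: "p = (i, \<alpha>)" by (cases p)
  have a: "i < r" "\<alpha> \<in> arcs k l n H (\<sigma>s i)" using assms unfolding p owners_def by auto
  have "owned k l \<alpha> \<subseteq> labelled" using owned_labelled(1)[OF a] by blast
  from prob_agree_on_le[OF this, of "\<lambda>_. i"] show ?thesis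
    unfolding p kept_def card_owned_eq[OF a] by simp
qed

lemma prob_kept_pair_le:
  assumes "p \<in> owners e" "p' \<in> owners e'" "p \<noteq> p'"
  shows "real (card (kept p \<inter> kept p')) / real (card \<Omega>) \<le> (1 / Imin) ^ (2 * z)"
proof -
  obtain i \<alpha> i' \<alpha>' where p: "p = (i, \<alpha>)" "p' = (i', \<alpha>')" by (cases p, cases p')
  have a: "i < r" "\<alpha> \<in> arcs k l n H (\<sigma>s i)" "i' < r" "\<alpha>' \<in> arcs k l n H (\<sigma>s i')"
    using assms unfolding p owners_def by auto
  show ?thesis
  proof (cases "owned k l \<alpha> \<inter> owned k l \<alpha>' = {}")
    case False
    then obtain f where f: "f \<in> owned k l \<alpha>" "f \<in> owned k l \<alpha>'" by blast
    have "i \<noteq> i'" using owner_unique[OF a(1,2) _ f(1)] a(4) f(2) assms(3) unfolding p by auto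
    hence "kept (i, \<alpha>) \<inter> kept (i', \<alpha>') = {}" unfolding kept_def using f by auto
    thus ?thesis unfolding p by simp
  next
    case True
    define t where "t = (\<lambda>f. if f \<in> owned k l \<alpha> then i else i')"
    have eq: "kept (i, \<alpha>) \<inter> kept (i', \<alpha>') = {lab \<in> \<Omega>. \<forall>f\<in>owned k l \<alpha> \<union> owned k l \<alpha>'. lab f = t f}"
      unfolding kept_def t_def using True by auto
    have card: "card (owned k l \<alpha> \<union> owned k l \<alpha>') = 2 * z"
      using card_Un_disjoint[OF finite_owned[OF a(1,2)] finite_owned[OF a(3,4)] True]
            card_owned_eq[OF a(1,2)] card_owned_eq[OF a(3,4)] by simp
    have "owned k l \<alpha> \<union> owned k l \<alpha>' \<subseteq> labelled"
      using owned_labelled(1) a by blast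
    from prob_agree_on_le[OF this, of t] show ?thesis unfolding p eq card .
  qed
qed

lemma prob_both_covered_le_sum:
  "real (card {lab \<in> \<Omega>. e1 \<in> covered lab \<and> e2 \<in> covered lab}) / real (card \<Omega>)
   \<le> (\<Sum>\<tau>\<in>owners e1 \<times> owners e2. real (card (kept (fst \<tau>) \<inter> kept (snd \<tau>))) / real (card \<Omega>))"
proof -
  define T where "T = owners e1 \<times> owners e2"
  have finT: "finite T" unfolding T_def using finite_owners by simp
  have cover: "{lab \<in> \<Omega>. e1 \<in> covered lab \<and> e2 \<in> covered lab} \<subseteq> (\<Union>\<tau>\<in>T. kept (fst \<tau>) \<inter> kept (snd \<tau>))"
  proof
    fix lab assume "lab \<in> {lab \<in> \<Omega>. e1 \<in> covered lab \<and> e2 \<in> covered lab}"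
    then obtain i \<alpha> i' \<alpha>' where "lab \<in> \<Omega>"
      "i < r" "\<alpha> \<in> arcs k l n H (\<sigma>s i)" "\<forall>e'\<in>owned k l \<alpha>. lab e' = i" "e1 \<in> owned k l \<alpha>"
      "i' < r" "\<alpha>' \<in> arcs k l n H (\<sigma>s i')" "\<forall>e'\<in>owned k l \<alpha>'. lab e' = i'" "e2 \<in> owned k l \<alpha>'"
      unfolding covered_iff by blast
    hence "((i, \<alpha>), (i', \<alpha>')) \<in> T" "lab \<in> kept (i, \<alpha>) \<inter> kept (i', \<alpha>')"
      unfolding T_def owners_def kept_def by auto
    thus "lab \<in> (\<Union>\<tau>\<in>T. kept (fst \<tau>) \<inter> kept (snd \<tau>))" by force
  qed
  have "card {lab \<in> \<Omega>. e1 \<in> covered lab \<and> e2 \<in> covered lab}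
        \<le> card (\<Union>\<tau>\<in>T. kept (fst \<tau>) \<inter> kept (snd \<tau>))"
    by (rule card_mono[OF _ cover]) (use finT finite_\<Omega> in \<open>auto simp: kept_def\<close>)
  also have "\<dots> \<le> (\<Sum>\<tau>\<in>T. card (kept (fst \<tau>) \<inter> kept (snd \<tau>)))"
    by (rule card_UN_le[OF finT])
  finally show ?thesis
    unfolding T_def using card_\<Omega>_pos
    by (simp add: sum_divide_distrib[symmetric] divide_right_mono flip: of_nat_sum)
qed

lemma prob_both_covered_le:
  assumes e: "e1 \<in> H" "e2 \<in> H" "e1 \<noteq> e2"
  shows "real (card {lab \<in> \<Omega>. e1 \<in> covered lab \<and> e2 \<in> covered lab}) / real (card \<Omega>)
         \<le> real (4 * q + 1) * (1 / Imin) ^ z + Imax\<^sup>2 * (1 / Imin) ^ (2 * z)"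
proof -
  define T where "T = owners e1 \<times> owners e2"
  define T1 where "T1 = {\<tau> \<in> T. fst \<tau> = snd \<tau>}"
  define P where "P = (\<lambda>\<tau>. real (card (kept (fst \<tau>) \<inter> kept (snd \<tau>))) / real (card \<Omega>))"
  have finT: "finite T" unfolding T_def using finite_owners by simp
  have "real (card {lab \<in> \<Omega>. e1 \<in> covered lab \<and> e2 \<in> covered lab}) / real (card \<Omega>) \<le> (\<Sum>\<tau>\<in>T. P \<tau>)"
    unfolding T_def P_def by (rule prob_both_covered_le_sum)
  also have "\<dots> = (\<Sum>\<tau>\<in>T1. P \<tau>) + (\<Sum>\<tau>\<in>T - T1. P \<tau>)"
    by (subst sum.subset_diff[of T1 T]) (auto simp: T1_def finT)
  also have "\<dots> \<le> (\<Sum>\<tau>\<in>T1. (1 / Imin) ^ z) + (\<Sum>\<tau>\<in>T - T1. (1 / Imin) ^ (2 * z))"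
  proof (rule add_mono; rule sum_mono)
    fix \<tau> assume "\<tau> \<in> T1"
    then obtain p where "\<tau> = (p, p)" "p \<in> owners e1" unfolding T1_def T_def by auto
    thus "P \<tau> \<le> (1 / Imin) ^ z" unfolding P_def using prob_kept_le by simp
  next
    fix \<tau> assume "\<tau> \<in> T - T1"
    thus "P \<tau> \<le> (1 / Imin) ^ (2 * z)"
      unfolding P_def T1_def T_def by (intro prob_kept_pair_le) auto
  qed
  also have "\<dots> = real (card T1) * (1 / Imin) ^ z + real (card (T - T1)) * (1 / Imin) ^ (2 * z)"
    by simp
  also have "\<dots> \<le> real (4 * q + 1) * (1 / Imin) ^ z + Imax\<^sup>2 * (1 / Imin) ^ (2 * z)"
  proof (intro add_mono mult_right_mono)
    have "T1 = (\<lambda>p. (p, p)) ` (owners e1 \<inter> owners e2)" unfolding T1_def T_def by auto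
    hence "card T1 = card (owners e1 \<inter> owners e2)" by (simp add: card_image inj_on_def)
    thus "real (card T1) \<le> real (4 * q + 1)" using card_common_owners_le[OF e] by simp
    have "real (card (T - T1)) \<le> real (card (owners e1)) * real (card (owners e2))"
      unfolding T_def using card_mono[OF finT, of "T - T1"]
      by (simp add: T_def card_cartesian_product flip: of_nat_mult)
    also have "\<dots> \<le> Imax * Imax"
      using card_owners_le[OF e(1)] card_owners_le[OF e(2)] by (intro mult_mono) auto
    finally show "real (card (T - T1)) \<le> Imax\<^sup>2" by (simp add: power2_eq_square)
  qed (use Imin_pos in simp_all)
  finally show ?thesis .
qed

lemma avg_N_le:
  "avg \<Omega> (\<lambda>lab. real (N lab))
   \<le> real (card Bs) * (real (4 * q + 1) * (1 / Imin) ^ z + Imax\<^sup>2 * (1 / Imin) ^ (2 * z))"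
proof -
  define P where "P = (\<lambda>lab B. A1 \<union> B \<in> covered lab \<and> A2 \<union> B \<in> covered lab)"
  define \<beta> where "\<beta> = real (4 * q + 1) * (1 / Imin) ^ z + Imax\<^sup>2 * (1 / Imin) ^ (2 * z)"
  have "(\<Sum>lab\<in>\<Omega>. real (N lab)) = (\<Sum>lab\<in>\<Omega>. \<Sum>B\<in>Bs. if P lab B then 1 else 0)"
    unfolding N_def P_def by (simp add: sum.If_cases finite_Bs Int_def)
  also have "\<dots> = (\<Sum>B\<in>Bs. real (card {lab\<in>\<Omega>. P lab B}))"
    by (subst sum.swap) (simp add: sum.If_cases finite_\<Omega> Int_def)
  finally have "avg \<Omega> (\<lambda>lab. real (N lab)) = (\<Sum>B\<in>Bs. real (card {lab\<in>\<Omega>. P lab B}) / real (card \<Omega>))"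
    unfolding avg_def by (simp add: sum_divide_distrib)
  also have "\<dots> \<le> (\<Sum>B\<in>Bs. \<beta>)"
    unfolding P_def \<beta>_def
    by (intro sum_mono prob_both_covered_le A1_union_neq_A2_union) (use B_sets in auto)
  finally show ?thesis unfolding \<beta>_def by simp
qed

lemma prob_N_exceeds_le:
  assumes t: "t > 0" and Bne: "Bs \<noteq> {}"
    and \<theta>: "\<theta> \<ge> real (card Bs) * (real (4 * q + 1) * (1 / Imin) ^ z + Imax\<^sup>2 * (1 / Imin) ^ (2 * z)) + t"
  shows "measure_pmf.prob (label_pmf k l n H \<sigma>s r) {lab. real (N lab) > \<theta>}
         \<le> exp (- (t\<^sup>2 / (16 * real z ^ 3 * Imax * real (card Bs))))"
proof -
  define g where "g = (\<lambda>lab. real (N lab))"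
  define c where "c = (\<lambda>f. if f \<in> influential_edges then 4 * real z else 0)"
  define C where "C = 32 * real z ^ 3 * Imax * real (card Bs)"
  obtain B0 where B0: "B0 \<in> Bs" using Bne by blast
  have Imax_pos: "Imax > 0"
    using I_lo[of "A1 \<union> B0"] I_hi[of "A1 \<union> B0"] B_sets[OF B0] Imin_pos by linarith
  have "real z > 0" "real (card Bs) > 0"
    using zpar_qpar_bounds(1)[OF kl] Bne finite_Bs by (simp_all add: card_gt_0_iff)
  hence C_pos: "C > 0" unfolding C_def using Imax_pos by simp
  define s where "s = 4 * t / C"
  have sum_c: "(\<Sum>x\<in>labelled. (c x)\<^sup>2) \<le> C"
  proof -
    have "(\<Sum>x\<in>labelled. (c x)\<^sup>2) = (\<Sum>x\<in>labelled. if x \<in> influential_edges then 16 * real z ^ 2 else 0)"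
      unfolding c_def by (intro sum.cong) (auto simp: power2_eq_square)
    also have "\<dots> = (\<Sum>x\<in>labelled \<inter> influential_edges. 16 * real z ^ 2)"
      using finite_labelled by (simp add: sum.If_cases)
    also have "labelled \<inter> influential_edges = influential_edges"
      using influential_edges_labelled by blast
    also have "(\<Sum>x\<in>influential_edges. 16 * real z ^ 2) \<le> 16 * real z ^ 2 * (2 * real z * Imax * real (card Bs))"
      using mult_left_mono[OF card_influential_edges_le, of "16 * real z ^ 2"] by simp
    also have "\<dots> = C" unfolding C_def by (simp add: power3_eq_cube power2_eq_square)
    finally show ?thesis .
  qed
  have "measure_pmf.prob (label_pmf k l n H \<sigma>s r) {lab. real (N lab) > \<theta>}
        \<le> real (card {f\<in>\<Omega>. g f \<ge> avg \<Omega> g + t}) / real (card \<Omega>)"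
    unfolding prob_label_pmf using avg_N_le \<theta> finite_\<Omega>
    by (intro divide_right_mono of_nat_mono card_mono) (auto simp: g_def)
  also have "\<dots> \<le> exp (s\<^sup>2 * (\<Sum>x\<in>labelled. (c x)\<^sup>2) / 8 - s * t)"
    unfolding \<Omega>_def g_def c_def
    by (rule mcdiarmid_tail[OF finite_labelled])
       (use finite_I t C_pos N_bounded_difference[unfolded \<Omega>_def] in \<open>auto simp: labelled_def s_def\<close>)
  also have "\<dots> \<le> exp (s\<^sup>2 * C / 8 - s * t)"
    using mult_left_mono[OF sum_c, of "s\<^sup>2"] by simp
  also have "s\<^sup>2 * C / 8 - s * t = - (2 * t\<^sup>2 / C)"
    unfolding s_def using C_pos by (simp add: field_simps power2_eq_square)
  also have "2 * t\<^sup>2 / C = t\<^sup>2 / (16 * real z ^ 3 * Imax * real (card Bs))"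
    unfolding C_def by simp
  finally show ?thesis .
qed

end

section \<open>Asymptotics\<close>

lemma one_le_ln_nat: "3 \<le> n \<Longrightarrow> 1 \<le> ln (real n)"
proof -
  assume "3 \<le> n"
  have "exp 1 \<le> (3::real)" using exp_le by simp
  also have "\<dots> \<le> real n" using \<open>3 \<le> n\<close> by simp
  finally show ?thesis using \<open>3 \<le> n\<close> by (subst ln_ge_iff) auto
qed

lemma one_le_kappa:
  assumes "3 \<le> n" "0 < \<epsilon>" "\<epsilon> \<le> 1"
  shows "1 \<le> kappa k n \<epsilon>"
proof -
  have "1 * 1 \<le> 6 * (real k + 1) * ln (real n)"
    using one_le_ln_nat[OF assms(1)] by (intro mult_mono) auto
  hence "1 \<le> 6 * (real k + 1) * ln (real n) / 1" by simp
  also have "\<dots> \<le> 6 * (real k + 1) * ln (real n) / \<epsilon>\<^sup>2"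
    using assms one_le_ln_nat[OF assms(1)] by (intro divide_left_mono) (auto simp: power_le_one)
  finally show ?thesis unfolding kappa_def .
qed

lemma mean_factor_le:
  fixes \<kappa> \<delta> c m :: real
  assumes "1 \<le> \<kappa>" "0 \<le> \<delta>" "\<delta> < 1" "2 \<le> z"
    and m: "c / (1 - \<delta>) ^ z + (1 + \<delta>)\<^sup>2 / (1 - \<delta>) ^ (2 * z) \<le> m"
  shows "c * (1 / ((1 - \<delta>) * \<kappa>)) ^ z + ((1 + \<delta>) * \<kappa>)\<^sup>2 * (1 / ((1 - \<delta>) * \<kappa>)) ^ (2 * z)
         \<le> m / \<kappa> ^ z"
proof -
  have kz: "\<kappa> ^ z > 0" using assms(1) by simp
  have "\<kappa>\<^sup>2 * \<kappa> ^ z \<le> \<kappa> ^ z * \<kappa> ^ z"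
    using assms(1,4) kz by (intro mult_right_mono power_increasing) auto
  hence "\<kappa>\<^sup>2 / \<kappa> ^ (2 * z) \<le> 1 / \<kappa> ^ z"
    using kz by (simp add: divide_simps mult_2 power_add)
  hence h1: "(1 + \<delta>)\<^sup>2 / (1 - \<delta>) ^ (2 * z) * (\<kappa>\<^sup>2 / \<kappa> ^ (2 * z))
             \<le> (1 + \<delta>)\<^sup>2 / (1 - \<delta>) ^ (2 * z) * (1 / \<kappa> ^ z)"
    using assms(3) by (intro mult_left_mono) auto
  have h2: "((1 + \<delta>) * \<kappa>)\<^sup>2 * (1 / ((1 - \<delta>) * \<kappa>)) ^ (2 * z)
                 = (1 + \<delta>)\<^sup>2 / (1 - \<delta>) ^ (2 * z) * (\<kappa>\<^sup>2 / \<kappa> ^ (2 * z))"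
    by (simp add: power_mult_distrib power_divide)
  have h3: "c * (1 / ((1 - \<delta>) * \<kappa>)) ^ z = c / (1 - \<delta>) ^ z * (1 / \<kappa> ^ z)"
    by (simp add: power_mult_distrib power_divide)
  from h1 h2 h3 have "c * (1 / ((1 - \<delta>) * \<kappa>)) ^ z + ((1 + \<delta>) * \<kappa>)\<^sup>2 * (1 / ((1 - \<delta>) * \<kappa>)) ^ (2 * z)
      \<le> c / (1 - \<delta>) ^ z * (1 / \<kappa> ^ z) + (1 + \<delta>)\<^sup>2 / (1 - \<delta>) ^ (2 * z) * (1 / \<kappa> ^ z)"
    by linarith
  also have "\<dots> = (c / (1 - \<delta>) ^ z + (1 + \<delta>)\<^sup>2 / (1 - \<delta>) ^ (2 * z)) * (1 / \<kappa> ^ z)"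
    by (simp only: distrib_right)
  also have "\<dots> \<le> m * (1 / \<kappa> ^ z)" using m kz by (intro mult_right_mono) auto
  finally show ?thesis by simp
qed

lemma tail_exponent_ge:
  fixes \<kappa> \<delta> b L c :: real and z q :: nat
  assumes "1 \<le> \<kappa>" "0 \<le> \<delta>" "\<delta> \<le> 1/2" "0 < z" "0 < q" "0 < b" "1 \<le> L" "0 \<le> c"
    and large: "32 * real z ^ 3 * c / real q ^ 2 \<le> b / \<kappa> ^ (2 * z + 1) / L"
  shows "c * L \<le> (real q * b / \<kappa> ^ z)\<^sup>2 / (16 * real z ^ 3 * ((1 + \<delta>) * \<kappa>) * b)"
proof -
  have "c * L \<le> 4/3 * (c * L)" using assms(7,8) by simp
  also have "\<dots> = real q ^ 2 / (24 * real z ^ 3) * (32 * real z ^ 3 * c / real q ^ 2 * L)"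
    using assms(4,5) by (simp add: field_simps)
  also have "\<dots> \<le> real q ^ 2 / (24 * real z ^ 3) * (b / \<kappa> ^ (2 * z + 1))"
    using mult_right_mono[OF large, of L] assms(7) by (intro mult_left_mono) auto
  also have "\<dots> = (real q * b / \<kappa> ^ z)\<^sup>2 / (16 * real z ^ 3 * (3/2 * \<kappa>) * b)"
    using assms(1,4,6) power_add[of \<kappa> z z]
    by (simp add: field_simps power2_eq_square power_add mult_2 mult_2_right)
  also have "\<dots> \<le> (real q * b / \<kappa> ^ z)\<^sup>2 / (16 * real z ^ 3 * ((1 + \<delta>) * \<kappa>) * b)"
    using assms(1-6) by (intro divide_left_mono mult_left_mono mult_right_mono mult_pos_pos) auto
  finally show ?thesis .
qed

lemma exp_neg_mult_ln: "0 < x \<Longrightarrow> exp (- (real m * ln x)) = 1 / x ^ m"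
  by (simp add: exp_minus exp_of_nat_mult divide_inverse)

lemma prob_N_large_le:
  fixes k l n :: nat and H :: "nat set set" and \<epsilon> p :: real and \<sigma>s :: "nat \<Rightarrow> nat \<Rightarrow> nat"
    and d :: nat and A1 A2 :: "nat set" and Bs :: "nat set set"
  defines "r \<equiv> rpar k l n \<epsilon> p" and "\<kappa> \<equiv> kappa k n \<epsilon>" and "\<delta> \<equiv> (real (zpar k l) + 2) * \<epsilon>"
    and "K \<equiv> k + 2 * qpar k l + 1"
  assumes kl: "1 \<le> l" "2 * l < k"
    and n_dvd: "qpar k l dvd n"
    and eps_pos: "0 < \<epsilon>"
    and H_kgraph: "kgraph k n H"
    and perm: "\<And>i. i < r \<Longrightarrow> \<sigma>s i permutes {1..n}"
    and I_size: "\<And>e. e \<in> H \<Longrightarrow>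
        (1 - \<delta>) * \<kappa> \<le> real (card (Iset k l n H \<sigma>s r e)) \<and>
        real (card (Iset k l n H \<sigma>s r e)) \<le> (1 + \<delta>) * \<kappa>"
    and few_condensed: "\<And>S t. S \<subseteq> {1..n} \<Longrightarrow> 1 \<le> t \<Longrightarrow> t \<le> 2 * qpar k l - k \<Longrightarrow>
        card S = k + t \<Longrightarrow> card {i. i < r \<and> condensed k l n H (\<sigma>s i) S} \<le> 4 * qpar k l + 1"
    and d_range: "1 \<le> d \<and> d \<le> l"
    and A_sets: "A1 \<subseteq> {1..n} \<and> card A1 = k - d \<and> A2 \<subseteq> {1..n} \<and> card A2 = k - d \<and> A1 \<noteq> A2"
    and B_sets: "\<And>B. B \<in> Bs \<Longrightarrow> B \<subseteq> {1..n} \<and> card B = d \<and> A1 \<union> B \<in> H \<and> A2 \<union> B \<in> H"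
    and n_ge: "3 \<le> n"
    and \<delta>_le: "\<delta> \<le> 1 / 2"
    and mean_factor: "real (4 * qpar k l + 1) / (1 - \<delta>) ^ zpar k l + (1 + \<delta>)\<^sup>2 / (1 - \<delta>) ^ (2 * zpar k l)
                      \<le> 6 * real (qpar k l)"
    and B_large: "32 * real (zpar k l) ^ 3 * (real K + 1) / real (qpar k l) ^ 2
                  \<le> real (card Bs) / \<kappa> ^ (2 * zpar k l + 1) / ln (real n)"
  shows "measure_pmf.prob (label_pmf k l n H \<sigma>s r)
            {lab. real (card {B \<in> Bs.
                      A1 \<union> B \<in> (\<Union>i < r. Hprime k l n H \<sigma>s lab i) \<and>
                      A2 \<union> B \<in> (\<Union>i < r. Hprime k l n H \<sigma>s lab i)})
                  > 7 * real (qpar k l) * real (card Bs) / \<kappa> ^ zpar k l}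
            * real n ^ K \<le> 1 / real n"
proof -
  define z where "z = zpar k l"
  define q where "q = qpar k l"
  note bounds = zpar_qpar_bounds[OF kl, folded z_def q_def]
  have \<delta>: "0 \<le> \<delta>" "\<delta> \<le> 1 / 2" using eps_pos \<delta>_le unfolding \<delta>_def by simp_all
  have "1 * \<epsilon> \<le> \<delta>" unfolding \<delta>_def using eps_pos by (intro mult_right_mono) auto
  hence \<kappa>: "1 \<le> \<kappa>" unfolding \<kappa>_def using one_le_kappa[OF n_ge eps_pos] \<delta> by simp
  interpret F: fixed_permutations k l n H \<sigma>s r d A1 A2 Bs "(1 - \<delta>) * \<kappa>" "(1 + \<delta>) * \<kappa>"
    by unfold_locales (use kl n_dvd H_kgraph perm I_size few_condensed d_range A_sets B_sets \<delta> \<kappa> in auto)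
  have "0 < 32 * real z ^ 3 * (real K + 1) / real q ^ 2" using bounds by simp
  hence B_pos: "0 < real (card Bs)" using B_large unfolding z_def q_def by (cases "card Bs = 0") auto
  define t where "t = real q * real (card Bs) / \<kappa> ^ z"
  have "real (4 * q + 1) * (1 / ((1 - \<delta>) * \<kappa>)) ^ z
          + ((1 + \<delta>) * \<kappa>)\<^sup>2 * (1 / ((1 - \<delta>) * \<kappa>)) ^ (2 * z)
        \<le> 6 * real q / \<kappa> ^ z"
    by (rule mean_factor_le[OF \<kappa> \<delta>(1) _ bounds(1) mean_factor[folded z_def q_def]]) (use \<delta> in simp)
  hence "real (card Bs) * (real (4 * q + 1) * (1 / ((1 - \<delta>) * \<kappa>)) ^ z
          + ((1 + \<delta>) * \<kappa>)\<^sup>2 * (1 / ((1 - \<delta>) * \<kappa>)) ^ (2 * z))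
        \<le> real (card Bs) * (6 * real q / \<kappa> ^ z)"
    using B_pos by (intro mult_left_mono) auto
  moreover have "7 * real q * real (card Bs) / \<kappa> ^ z = real (card Bs) * (6 * real q / \<kappa> ^ z) + t"
    unfolding t_def by (simp add: field_simps)
  ultimately have mean: "real (card Bs) * (real (4 * q + 1) * (1 / ((1 - \<delta>) * \<kappa>)) ^ z
          + ((1 + \<delta>) * \<kappa>)\<^sup>2 * (1 / ((1 - \<delta>) * \<kappa>)) ^ (2 * z)) + t
        \<le> 7 * real q * real (card Bs) / \<kappa> ^ z"
    by linarith
  have "measure_pmf.prob (label_pmf k l n H \<sigma>s r)
          {lab. real (F.N lab) > 7 * real q * real (card Bs) / \<kappa> ^ z}
        \<le> exp (- (t\<^sup>2 / (16 * real z ^ 3 * ((1 + \<delta>) * \<kappa>) * real (card Bs))))"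
    using F.prob_N_exceeds_le[OF _ _ mean[unfolded z_def q_def]] B_pos \<kappa> bounds
    unfolding t_def z_def q_def by (simp add: card_gt_0_iff)
  also have "\<dots> \<le> exp (- ((real K + 1) * ln (real n)))"
    using tail_exponent_ge[OF \<kappa> \<delta> _ _ B_pos one_le_ln_nat[OF n_ge], of z q "real K + 1"]
          B_large bounds
    unfolding t_def z_def q_def by simp
  also have "\<dots> = 1 / real n ^ (K + 1)" using exp_neg_mult_ln[of "real n" "K + 1"] n_ge by (simp add: add.commute)
  finally have "measure_pmf.prob (label_pmf k l n H \<sigma>s r)
          {lab. real (F.N lab) > 7 * real q * real (card Bs) / \<kappa> ^ z} * real n ^ K
        \<le> 1 / real n ^ (K + 1) * real n ^ K"
    by (rule mult_right_mono) simp
  also have "\<dots> = 1 / real n" using n_ge by simp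
  finally show ?thesis unfolding F.N_def F.covered_def z_def q_def .
qed

lemma eventually_mean_factor_le:
  fixes \<epsilon> :: "nat \<Rightarrow> real" and c :: real
  assumes "\<epsilon> \<longlonglongrightarrow> 0" "2 \<le> q"
  shows "eventually (\<lambda>j. real (4 * q + 1) / (1 - c * \<epsilon> j) ^ z
                           + (1 + c * \<epsilon> j)\<^sup>2 / (1 - c * \<epsilon> j) ^ (2 * z) \<le> 6 * real q) sequentially"
proof -
  have "(\<lambda>j. real (4 * q + 1) / (1 - c * \<epsilon> j) ^ z + (1 + c * \<epsilon> j)\<^sup>2 / (1 - c * \<epsilon> j) ^ (2 * z))
        \<longlonglongrightarrow> real (4 * q + 1) / (1 - c * 0) ^ z + (1 + c * 0)\<^sup>2 / (1 - c * 0) ^ (2 * z)"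
    by (intro tendsto_intros assms(1)) auto
  moreover have "real (4 * q + 1) / (1 - c * 0) ^ z + (1 + c * 0)\<^sup>2 / (1 - c * 0) ^ (2 * z) < 6 * real q"
    using assms(2) by simp
  ultimately have "eventually (\<lambda>j. real (4 * q + 1) / (1 - c * \<epsilon> j) ^ z
                           + (1 + c * \<epsilon> j)\<^sup>2 / (1 - c * \<epsilon> j) ^ (2 * z) < 6 * real q) sequentially"
    by (rule order_tendstoD(2))
  thus ?thesis by (rule eventually_mono) simp
qed

theorem lemma8:
  fixes k l :: nat
    and n :: "nat \<Rightarrow> nat"
    and H :: "nat \<Rightarrow> nat set set"
    and \<epsilon> p :: "nat \<Rightarrow> real"
    and \<sigma>s :: "nat \<Rightarrow> nat \<Rightarrow> nat \<Rightarrow> nat"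
    and d :: "nat \<Rightarrow> nat"
    and A1 A2 :: "nat \<Rightarrow> nat set"
    and \<B> :: "nat \<Rightarrow> nat set set"
  assumes kl: "1 \<le> l" "2 * l < k"
    and n_lim: "filterlim n at_top sequentially"
    and n_dvd: "\<And>j. qpar k l dvd n j"
    and eps_pos: "\<And>j. 0 < \<epsilon> j"
    and eps_lim: "\<epsilon> \<longlonglongrightarrow> 0"
    and p_pos: "\<And>j. 0 < p j" "\<And>j. p j \<le> 1"
    and H_kgraph: "\<And>j. kgraph k (n j) (H j)"
    and H_reg: "\<And>j. regular k l (n j) (H j) (\<epsilon> j) (p j)"
    and perm: "\<And>j i. i < rpar k l (n j) (\<epsilon> j) (p j) \<Longrightarrow> \<sigma>s j i permutes {1..n j}"
    and I_size: "\<And>j e. e \<in> H j \<Longrightarrow>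
        (1 - (real (zpar k l) + 2) * \<epsilon> j) * kappa k (n j) (\<epsilon> j)
          \<le> real (card (Iset k l (n j) (H j) (\<sigma>s j) (rpar k l (n j) (\<epsilon> j) (p j)) e)) \<and>
        real (card (Iset k l (n j) (H j) (\<sigma>s j) (rpar k l (n j) (\<epsilon> j) (p j)) e))
          \<le> (1 + (real (zpar k l) + 2) * \<epsilon> j) * kappa k (n j) (\<epsilon> j)"
    and cond: "\<And>j S t. S \<subseteq> {1..n j} \<Longrightarrow> 1 \<le> t \<Longrightarrow> t \<le> 2 * qpar k l - k \<Longrightarrow>
        card S = k + t \<Longrightarrow>
        card {i. i < rpar k l (n j) (\<epsilon> j) (p j) \<and> condensed k l (n j) (H j) (\<sigma>s j i) S}
          \<le> 4 * qpar k l + 1"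
    and d_range: "\<And>j. 1 \<le> d j \<and> d j \<le> l"
    and A_sets: "\<And>j. A1 j \<subseteq> {1..n j} \<and> card (A1 j) = k - d j \<and>
                      A2 j \<subseteq> {1..n j} \<and> card (A2 j) = k - d j \<and> A1 j \<noteq> A2 j"
    and B_sets: "\<And>j B. B \<in> \<B> j \<Longrightarrow> B \<subseteq> {1..n j} \<and> card B = d j \<and>
                      A1 j \<union> B \<in> H j \<and> A2 j \<union> B \<in> H j"
    and B_large: "filterlim (\<lambda>j. real (card (\<B> j)) / kappa k (n j) (\<epsilon> j) ^ (2 * zpar k l + 1)
                                  / ln (real (n j))) at_top sequentially"
  shows "(\<lambda>j. measure_pmf.prob
            (label_pmf k l (n j) (H j) (\<sigma>s j) (rpar k l (n j) (\<epsilon> j) (p j)))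
            {lab. real (card {B \<in> \<B> j.
                      A1 j \<union> B \<in> (\<Union>i < rpar k l (n j) (\<epsilon> j) (p j). Hprime k l (n j) (H j) (\<sigma>s j) lab i) \<and>
                      A2 j \<union> B \<in> (\<Union>i < rpar k l (n j) (\<epsilon> j) (p j). Hprime k l (n j) (H j) (\<sigma>s j) lab i)})
                  > 7 * real (qpar k l) * real (card (\<B> j)) / kappa k (n j) (\<epsilon> j) ^ zpar k l}
            * real (n j) ^ (k + 2 * qpar k l + 1)) \<longlonglongrightarrow> 0"
    (is "?P \<longlonglongrightarrow> 0")
proof (rule tendsto_sandwich[of "\<lambda>_. 0" _ _ "\<lambda>j. 1 / real (n j)"])
  have "filterlim (\<lambda>j. real (n j)) at_top sequentially"
    by (rule filterlim_compose[OF filterlim_real_sequentially n_lim])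
  from tendsto_inverse_0_at_top[OF this]
  show "(\<lambda>j. 1 / real (n j)) \<longlonglongrightarrow> 0" by (simp add: divide_inverse)
  have "(\<lambda>j. (real (zpar k l) + 2) * \<epsilon> j) \<longlonglongrightarrow> (real (zpar k l) + 2) * 0"
    by (intro tendsto_intros eps_lim)
  hence "eventually (\<lambda>j. (real (zpar k l) + 2) * \<epsilon> j < 1 / 2) sequentially"
    by (rule order_tendstoD(2)) simp
  moreover have "eventually (\<lambda>j. 3 \<le> n j) sequentially"
    using n_lim unfolding filterlim_at_top by blast
  moreover have "eventually (\<lambda>j. 32 * real (zpar k l) ^ 3 * (real (k + 2 * qpar k l + 1) + 1)
      / real (qpar k l) ^ 2 \<le> real (card (\<B> j)) / kappa k (n j) (\<epsilon> j) ^ (2 * zpar k l + 1)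
      / ln (real (n j))) sequentially"
    using B_large unfolding filterlim_at_top by blast
  ultimately show "eventually (\<lambda>j. ?P j \<le> 1 / real (n j)) sequentially"
    using eventually_mean_factor_le[OF eps_lim zpar_qpar_bounds(5)[OF kl],
                                   where c = "real (zpar k l) + 2" and z = "zpar k l"]
  proof eventually_elim
    case (elim j)
    show ?case
      by (rule prob_N_large_le)
         (use kl n_dvd eps_pos H_kgraph perm I_size cond d_range A_sets B_sets elim in auto)
  qed
qed auto

end
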